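(* Let $m$ be a positive integer and $0\le r\le n$ an integer with $\sigma(m-r)\le n$. Let $v=(v_1,\dots,v_n)$ and let $V\in\mathcal{S}^{m-r}\mathbb{R}[v]$ be the symmetric matrix whose upper triangular part is filled row by row with $v_1,\dots,v_{\sigma(m-r)}$ (first row $v_1,\dots,v_{m-r}$, second row from the diagonal $v_{m-r+1},\dots,v_{2(m-r)-1}$, etc.). Suppose a formal power series $f\in\mathbb{R}[[v_1,\dots,v_n]]$ admits an expansion $$f=\langle C,V\rangle+f_2(v)+\sum_{i=3}^\infty f_i,$$ where $C\in\mathcal{S}^{m-r}$ is positive definite, $f_2$ is a quadratic form such that $f_2(0,\dots,0,v_{\sigma(m-r)+1},\dots,v_n)$ is positive definite in $v_{\sigma(m-r)+1},\dots,v_n$, and $f_i$ is the degree-$i$ homogeneous part of $f$. Then $f$ lies in the quadratic module of $\mathbb{R}[[v]]$ generated by the image of $\mathrm{QM}[V]$, i.e., $f\in\widehat{\mathrm{QM}[V]}_0$.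
   Context: $\sigma(d)=d(d+1)/2$. $\langle W,Y\rangle=\mathrm{tr}(WY^T)$. $\mathrm{QM}[V]=\{\sigma+\sum_{t=1}^s w_t^TVw_t:\sigma\text{ a sum of squares in }\mathbb{R}[v],\ w_t\in\mathbb{R}[v]^{m-r},\ s\in\mathbb{N}\}$. $\widehat{\mathrm{QM}[V]}_0$ denotes the quadratic module in the formal power series ring $\mathbb{R}[[v]]$ (the completion of the localization of $\mathbb{R}[v]$ at $0$) generated by the image of $\mathrm{QM}[V]$ under the natural embedding, i.e., the set of finite sums $\sum_j s_jq_j$ with $s_j$ sums of squares in $\mathbb{R}[[v]]$ and $q_j\in\mathrm{QM}[V]$. *)

theory Defs
  imports Complex_Main "HOL-Library.Poly_Mapping"
begin

text \<open>Formal power series in the variables v_1,...,v_n over the reals are modelled as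
  coefficient functions on monomials (finitely supported exponent vectors).
  Variable v_(k+1) has index k (0-based).\<close>

type_synonym mon = "nat \<Rightarrow>\<^sub>0 nat"
type_synonym fps = "mon \<Rightarrow> real"

definition in_vars :: "nat \<Rightarrow> fps \<Rightarrow> bool" where
  "in_vars n f \<longleftrightarrow> (\<forall>\<alpha>. f \<alpha> \<noteq> 0 \<longrightarrow> Poly_Mapping.keys \<alpha> \<subseteq> {..<n})"

definition is_poly :: "nat \<Rightarrow> fps \<Rightarrow> bool" where
  "is_poly n p \<longleftrightarrow> in_vars n p \<and> finite {\<alpha>. p \<alpha> \<noteq> 0}"

definition fps_mult :: "fps \<Rightarrow> fps \<Rightarrow> fps" where
  "fps_mult f g = (\<lambda>\<alpha>. \<Sum>p\<in>{(\<beta>, \<gamma>). \<beta> + \<gamma> = \<alpha>}. f (fst p) * g (snd p))"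

definition mdeg :: "mon \<Rightarrow> nat" where
  "mdeg \<alpha> = (\<Sum>i\<in>Poly_Mapping.keys \<alpha>. Poly_Mapping.lookup \<alpha> i)"

definition hom_part :: "nat \<Rightarrow> fps \<Rightarrow> fps" where
  "hom_part i f = (\<lambda>\<alpha>. if mdeg \<alpha> = i then f \<alpha> else 0)"

definition var :: "nat \<Rightarrow> fps" where
  "var k = (\<lambda>\<alpha>. if \<alpha> = Poly_Mapping.single k 1 then 1 else 0)"

definition peval :: "fps \<Rightarrow> (nat \<Rightarrow> real) \<Rightarrow> real" where
  "peval p x = (\<Sum>\<alpha>\<in>{\<alpha>. p \<alpha> \<noteq> 0}. p \<alpha> * (\<Prod>i\<in>Poly_Mapping.keys \<alpha>. x i ^ Poly_Mapping.lookup \<alpha> i))"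

definition sigma :: "nat \<Rightarrow> nat" where
  "sigma d = d * (d + 1) div 2"

text \<open>Index (0-based) of the variable in entry (i,j), i \<le> j, of the d x d symmetric matrix V
  whose upper triangular part is filled row by row: row i (0-based) starts at
  (\<Sum>k<i. d - k) and its entries are (i,i),(i,i+1),...,(i,d-1).\<close>
definition vidx :: "nat \<Rightarrow> nat \<Rightarrow> nat \<Rightarrow> nat" where
  "vidx d i j = (if i \<le> j then (\<Sum>k<i. d - k) + (j - i) else (\<Sum>k<j. d - k) + (i - j))"

definition Vmat :: "nat \<Rightarrow> nat \<Rightarrow> nat \<Rightarrow> fps" where
  "Vmat d i j = var (vidx d i j)"

definition pos_def :: "nat \<Rightarrow> (nat \<Rightarrow> nat \<Rightarrow> real) \<Rightarrow> bool" where
  "pos_def d C \<longleftrightarrow> (\<forall>i<d. \<forall>j<d. C i j = C j i) \<and>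
     (\<forall>x::nat \<Rightarrow> real. (\<exists>i<d. x i \<noteq> 0) \<longrightarrow> (\<Sum>i<d. \<Sum>j<d. x i * C i j * x j) > 0)"

definition inner_CV :: "nat \<Rightarrow> (nat \<Rightarrow> nat \<Rightarrow> real) \<Rightarrow> fps" where
  "inner_CV d C = (\<lambda>\<alpha>. \<Sum>i<d. \<Sum>j<d. C i j * Vmat d i j \<alpha>)"

definition sos_poly :: "nat \<Rightarrow> fps \<Rightarrow> bool" where
  "sos_poly n s \<longleftrightarrow> (\<exists>(K::nat) p. (\<forall>k<K. is_poly n (p k)) \<and>
      s = (\<lambda>\<alpha>. \<Sum>k<K. fps_mult (p k) (p k) \<alpha>))"

definition sos_fps :: "nat \<Rightarrow> fps \<Rightarrow> bool" where
  "sos_fps n s \<longleftrightarrow> (\<exists>(K::nat) g. (\<forall>k<K. in_vars n (g k)) \<and>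
      s = (\<lambda>\<alpha>. \<Sum>k<K. fps_mult (g k) (g k) \<alpha>))"

definition QM :: "nat \<Rightarrow> nat \<Rightarrow> fps set" where
  "QM n d = {q. \<exists>\<sigma> (s::nat) w. sos_poly n \<sigma> \<and> (\<forall>t<s. \<forall>i<d. is_poly n (w t i)) \<and>
      q = (\<lambda>\<alpha>. \<sigma> \<alpha> + (\<Sum>t<s. \<Sum>i<d. \<Sum>j<d.
                 fps_mult (w t i) (fps_mult (Vmat d i j) (w t j)) \<alpha>))}"

definition QM_hat :: "nat \<Rightarrow> nat \<Rightarrow> fps set" where
  "QM_hat n d = {f. \<exists>(J::nat) s q. (\<forall>j<J. sos_fps n (s j) \<and> q j \<in> QM n d) \<and>
      f = (\<lambda>\<alpha>. \<Sum>j<J. fps_mult (s j) (q j) \<alpha>)}"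

end

theory Submission
  imports Defs "HOL-Analysis.Convex"
begin

text \<open>Work in the ring of formal power series and sort the monomials of \<open>f\<close> by their least
  variable, \<open>f = \<Sum>\<^sub>k v\<^sub>k f\<^sub>k\<close>. The terms whose \<open>v\<^sub>k\<close> is an entry of \<open>V\<close> regroup into
  \<open>\<Sum>\<^sub>i\<^sub>j H\<^sub>i\<^sub>j V\<^sub>i\<^sub>j\<close> with \<open>H(0) = C\<close>. As \<open>C - \<epsilon>I\<close> is still positive definite for small
  \<open>\<epsilon> > 0\<close>, it is a sum of rank-one forms \<open>c c\<^sup>T\<close>, contributing elements \<open>c\<^sup>T V c\<close> of \<open>QM[V]\<close>;
  the rest is a combination of \<open>(e\<^sub>i \<plusminus> e\<^sub>j)\<^sup>T V (e\<^sub>i \<plusminus> e\<^sub>j)\<close> with weights of positive constant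
  term, and such series are squares. The remaining terms only involve the other variables and
  have no linear part, so they form \<open>y\<^sup>T G y\<close> where \<open>G(0)\<close> is the positive definite matrix of
  \<open>f\<^sub>2\<close> in these variables. Since series with positive constant term are squares of units,
  Cholesky factorisation works over the series ring and makes \<open>y\<^sup>T G y\<close> a sum of squares.\<close>

abbreviation mvar :: "nat \<Rightarrow> mon" where
  "mvar k \<equiv> Poly_Mapping.single k (Suc 0)"

lemma keys_add_mon: "Poly_Mapping.keys ((\<beta>::mon) + \<gamma>) = Poly_Mapping.keys \<beta> \<union> Poly_Mapping.keys \<gamma>"
  by (auto simp: in_keys_iff lookup_add)

lemma mvar_eq_iff: "mvar k = mvar l \<longleftrightarrow> k = l"
  by (metis lookup_single_eq lookup_single_not_eq nat.distinct(1))

lemma lookup_minus_mvar: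
  "Poly_Mapping.lookup (\<alpha> - mvar k) i = Poly_Mapping.lookup \<alpha> i - (if i = k then 1 else 0)"
  by (simp add: lookup_minus lookup_single when_def)

lemma minus_mvar_add: "Poly_Mapping.lookup \<alpha> k > 0 \<Longrightarrow> \<alpha> - mvar k + mvar k = \<alpha>"
  by (intro poly_mapping_eqI) (auto simp: lookup_add lookup_minus_mvar lookup_single when_def)

lemma mdeg_eq_sum: "finite K \<Longrightarrow> Poly_Mapping.keys \<alpha> \<subseteq> K \<Longrightarrow> mdeg \<alpha> = (\<Sum>i\<in>K. Poly_Mapping.lookup \<alpha> i)"
  unfolding mdeg_def by (rule sum.mono_neutral_left) (auto simp: in_keys_iff)

lemma mdeg_add: "mdeg (\<beta> + \<gamma>) = mdeg \<beta> + mdeg \<gamma>"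
proof -
  let ?K = "Poly_Mapping.keys \<beta> \<union> Poly_Mapping.keys \<gamma>"
  have "mdeg (\<beta> + \<gamma>) = (\<Sum>i\<in>?K. Poly_Mapping.lookup (\<beta> + \<gamma>) i)"
    by (rule mdeg_eq_sum) (auto simp: in_keys_iff lookup_add)
  also have "\<dots> = (\<Sum>i\<in>?K. Poly_Mapping.lookup \<beta> i) + (\<Sum>i\<in>?K. Poly_Mapping.lookup \<gamma> i)"
    by (simp add: lookup_add sum.distrib)
  also have "\<dots> = mdeg \<beta> + mdeg \<gamma>"
    by (subst (1 2) mdeg_eq_sum[of ?K]) auto
  finally show ?thesis .
qed

lemma mdeg_eq_0_iff: "mdeg \<alpha> = 0 \<longleftrightarrow> \<alpha> = 0"
proof
  assume "mdeg \<alpha> = 0"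
  then have "\<forall>i\<in>Poly_Mapping.keys \<alpha>. Poly_Mapping.lookup \<alpha> i = 0"
    unfolding mdeg_def by (simp add: sum_eq_0_iff)
  then show "\<alpha> = 0" by (auto simp: in_keys_iff intro!: poly_mapping_eqI)
qed (simp add: mdeg_def)

lemma mdeg_single [simp]: "mdeg (Poly_Mapping.single k c) = c"
  by (cases "c = 0") (auto simp: mdeg_def)

definition splits :: "mon \<Rightarrow> (mon \<times> mon) set" where
  "splits \<alpha> = {(\<beta>, \<gamma>). \<beta> + \<gamma> = \<alpha>}"

lemma finite_mon_divisors:
  "finite {\<beta>::mon. \<forall>i. Poly_Mapping.lookup \<beta> i \<le> Poly_Mapping.lookup \<alpha> i}"
proof -
  let ?D = "{\<beta>::mon. \<forall>i. Poly_Mapping.lookup \<beta> i \<le> Poly_Mapping.lookup \<alpha> i}"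
  let ?K = "Poly_Mapping.keys \<alpha>"
  let ?B = "{..Max (insert 0 (Poly_Mapping.lookup \<alpha> ` ?K))}"
  let ?F = "{g::nat \<Rightarrow> nat. \<forall>x. (x \<in> ?K \<longrightarrow> g x \<in> ?B) \<and> (x \<notin> ?K \<longrightarrow> g x = 0)}"
  have "finite ?F"
    by (rule finite_set_of_finite_funs) auto
  moreover have "Poly_Mapping.lookup ` ?D \<subseteq> ?F"
  proof clarify
    fix \<beta> :: mon and x
    assume le: "\<forall>i. Poly_Mapping.lookup \<beta> i \<le> Poly_Mapping.lookup \<alpha> i"
    have "Poly_Mapping.lookup \<alpha> x \<le> Max (insert 0 (Poly_Mapping.lookup \<alpha> ` ?K))"
      by (cases "x \<in> ?K") (auto simp: in_keys_iff intro: Max_ge)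
    then show "(x \<in> ?K \<longrightarrow> Poly_Mapping.lookup \<beta> x \<in> ?B) \<and> (x \<notin> ?K \<longrightarrow> Poly_Mapping.lookup \<beta> x = 0)"
      using le[rule_format, of x] by (auto simp: in_keys_iff)
  qed
  moreover have "inj_on Poly_Mapping.lookup ?D"
    by (simp add: inj_on_def poly_mapping_eqI)
  ultimately show ?thesis
    using finite_imageD finite_subset by blast
qed

lemma finite_splits: "finite (splits \<alpha>)"
proof -
  have "splits \<alpha> \<subseteq> (\<lambda>\<beta>. (\<beta>, \<alpha> - \<beta>)) ` {\<beta>. \<forall>i. Poly_Mapping.lookup \<beta> i \<le> Poly_Mapping.lookup \<alpha> i}"
    by (auto simp: splits_def lookup_add image_iff)
  then show ?thesis
    using finite_mon_divisors finite_subset by blast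
qed

lemma splits_0: "splits 0 = {(0, 0)}"
  by (auto simp: splits_def poly_mapping_eq_iff fun_eq_iff lookup_add)

lemma sum_splits_fst_0: "(\<Sum>p\<in>splits \<alpha>. if fst p = 0 then g p else 0) = g (0, \<alpha>)"
proof -
  have "(\<Sum>p\<in>splits \<alpha>. if fst p = 0 then g p else 0) = (\<Sum>p\<in>splits \<alpha>. if p = (0, \<alpha>) then g p else 0)"
    by (rule sum.cong) (auto simp: splits_def)
  then show ?thesis
    using sum.delta[OF finite_splits, of "(0, \<alpha>)" g \<alpha>] by (simp add: splits_def)
qed

lemma sum_splits_snd_0: "(\<Sum>p\<in>splits \<alpha>. if snd p = 0 then g p else 0) = g (\<alpha>, 0)"
proof -
  have "(\<Sum>p\<in>splits \<alpha>. if snd p = 0 then g p else 0) = (\<Sum>p\<in>splits \<alpha>. if p = (\<alpha>, 0) then g p else 0)"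
    by (rule sum.cong) (auto simp: splits_def)
  then show ?thesis
    using sum.delta[OF finite_splits, of "(\<alpha>, 0)" g \<alpha>] by (simp add: splits_def)
qed

lemma fps_mult_splits: "fps_mult f g \<alpha> = (\<Sum>p\<in>splits \<alpha>. f (fst p) * g (snd p))"
  by (simp add: fps_mult_def splits_def)

lemma fps_mult_commute: "fps_mult f g = fps_mult g f"
proof
  fix \<alpha>
  show "fps_mult f g \<alpha> = fps_mult g f \<alpha>"
    unfolding fps_mult_splits
    by (rule sum.reindex_bij_witness[where i="\<lambda>(a, b). (b, a)" and j="\<lambda>(a, b). (b, a)"])
       (auto simp: splits_def add.commute)
qed

lemma fps_mult_assoc: "fps_mult (fps_mult f g) h = fps_mult f (fps_mult g h)"
proof
  fix \<alpha>
  have "fps_mult (fps_mult f g) h \<alpha>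
      = (\<Sum>p\<in>splits \<alpha>. \<Sum>q\<in>splits (fst p). f (fst q) * g (snd q) * h (snd p))"
    unfolding fps_mult_splits by (simp add: sum_distrib_right)
  also have "\<dots> = (\<Sum>x\<in>Sigma (splits \<alpha>) (\<lambda>p. splits (fst p)).
                     f (fst (snd x)) * g (snd (snd x)) * h (snd (fst x)))"
    by (subst sum.Sigma) (simp_all add: finite_splits split_beta)
  also have "\<dots> = (\<Sum>x\<in>Sigma (splits \<alpha>) (\<lambda>p. splits (snd p)).
                     f (fst (fst x)) * (g (fst (snd x)) * h (snd (snd x))))"
    by (rule sum.reindex_bij_witness[where i="\<lambda>((a, r), (b, q)). ((a + b, q), (a, b))"
          and j="\<lambda>((p, q), (a, b)). ((a, b + q), (b, q))"])
       (auto simp: splits_def add.assoc)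
  also have "\<dots> = (\<Sum>p\<in>splits \<alpha>. \<Sum>q\<in>splits (snd p). f (fst p) * (g (fst q) * h (snd q)))"
    by (subst sum.Sigma) (simp_all add: finite_splits split_beta)
  also have "\<dots> = fps_mult f (fps_mult g h) \<alpha>"
    unfolding fps_mult_splits by (simp add: sum_distrib_left)
  finally show "fps_mult (fps_mult f g) h \<alpha> = fps_mult f (fps_mult g h) \<alpha>" .
qed

lemma fps_mult_const_left: "fps_mult (\<lambda>\<alpha>. if \<alpha> = 0 then c else 0) g = (\<lambda>\<alpha>. c * g \<alpha>)"
proof
  fix \<alpha>
  have "fps_mult (\<lambda>\<alpha>. if \<alpha> = 0 then c else 0) g \<alpha> = (\<Sum>p\<in>splits \<alpha>. if fst p = 0 then c * g (snd p) else 0)"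
    unfolding fps_mult_splits by (rule sum.cong) auto
  then show "fps_mult (\<lambda>\<alpha>. if \<alpha> = 0 then c else 0) g \<alpha> = c * g \<alpha>"
    by (simp add: sum_splits_fst_0)
qed

lemma fps_mult_add_left: "fps_mult (\<lambda>\<alpha>. f \<alpha> + g \<alpha>) h = (\<lambda>\<alpha>. fps_mult f h \<alpha> + fps_mult g h \<alpha>)"
  unfolding fps_mult_splits by (auto simp: algebra_simps sum.distrib)

lemma fps_mult_scale_left: "fps_mult (\<lambda>\<alpha>. c * f \<alpha>) g = (\<lambda>\<alpha>. c * fps_mult f g \<alpha>)"
  unfolding fps_mult_splits by (auto simp: sum_distrib_left ac_simps)

section \<open>The ring of formal power series\<close>

typedef pser = "UNIV :: fps set"
  morphisms pcoeff Abs_pser by auto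

setup_lifting type_definition_pser

instantiation pser :: comm_ring_1
begin
lift_definition zero_pser :: pser is "\<lambda>_. 0" .
lift_definition one_pser :: pser is "\<lambda>\<alpha>. if \<alpha> = 0 then 1 else 0" .
lift_definition plus_pser :: "pser \<Rightarrow> pser \<Rightarrow> pser" is "\<lambda>f g \<alpha>. f \<alpha> + g \<alpha>" .
lift_definition minus_pser :: "pser \<Rightarrow> pser \<Rightarrow> pser" is "\<lambda>f g \<alpha>. f \<alpha> - g \<alpha>" .
lift_definition uminus_pser :: "pser \<Rightarrow> pser" is "\<lambda>f \<alpha>. - f \<alpha>" .
lift_definition times_pser :: "pser \<Rightarrow> pser \<Rightarrow> pser" is fps_mult .
instance
proof
  fix a b c :: pser
  show "a * b * c = a * (b * c)" by transfer (rule fps_mult_assoc)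
  show "a * b = b * a" by transfer (rule fps_mult_commute)
  show "1 * a = a" by transfer (simp add: fps_mult_const_left)
  show "(a + b) * c = a * c + b * c" by transfer (rule fps_mult_add_left)
  show "a + b + c = a + (b + c)" by transfer (simp add: add.assoc)
  show "a + b = b + a" by transfer (simp add: add.commute)
  show "0 + a = a" by transfer simp
  show "- a + a = 0" by transfer simp
  show "a - b = a + - b" by transfer simp
  show "(0::pser) \<noteq> 1" by transfer (metis zero_neq_one)
qed
end

instantiation pser :: real_algebra_1
begin
lift_definition scaleR_pser :: "real \<Rightarrow> pser \<Rightarrow> pser" is "\<lambda>c f \<alpha>. c * f \<alpha>" .
instance
proof
  fix a b :: pser and x y :: real
  show "x *\<^sub>R (a + b) = x *\<^sub>R a + x *\<^sub>R b" by transfer (simp add: algebra_simps)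
  show "(x + y) *\<^sub>R a = x *\<^sub>R a + y *\<^sub>R a" by transfer (simp add: algebra_simps)
  show "x *\<^sub>R y *\<^sub>R a = (x * y) *\<^sub>R a" by transfer (simp add: mult.assoc)
  show "1 *\<^sub>R a = a" by transfer simp
  show "x *\<^sub>R a * b = x *\<^sub>R (a * b)" by transfer (rule fps_mult_scale_left)
  show "a * x *\<^sub>R b = x *\<^sub>R (a * b)" by transfer (metis fps_mult_commute fps_mult_scale_left)
qed
end

lemma pcoeff_add [simp]: "pcoeff (a + b) \<alpha> = pcoeff a \<alpha> + pcoeff b \<alpha>"
  by transfer simp

lemma pcoeff_diff [simp]: "pcoeff (a - b) \<alpha> = pcoeff a \<alpha> - pcoeff b \<alpha>"
  by transfer simp

lemma pcoeff_0 [simp]: "pcoeff 0 \<alpha> = 0"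
  by transfer simp

lemma pcoeff_1: "pcoeff 1 \<alpha> = (if \<alpha> = 0 then 1 else 0)"
  by transfer simp

lemma pcoeff_mult: "pcoeff (a * b) = fps_mult (pcoeff a) (pcoeff b)"
  by transfer simp

lemma pcoeff_sum: "pcoeff (sum g S) \<alpha> = (\<Sum>x\<in>S. pcoeff (g x) \<alpha>)"
  by (induction S rule: infinite_finite_induct) auto

lemma pcoeff_of_real: "pcoeff (of_real c) \<alpha> = (if \<alpha> = 0 then c else 0)"
  unfolding of_real_def by transfer simp

definition const_coeff :: "pser \<Rightarrow> real" where
  "const_coeff a = pcoeff a 0"

lemma const_coeff_add [simp]: "const_coeff (a + b) = const_coeff a + const_coeff b"
  by (simp add: const_coeff_def)

lemma const_coeff_diff [simp]: "const_coeff (a - b) = const_coeff a - const_coeff b"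
  by (simp add: const_coeff_def)

lemma const_coeff_1 [simp]: "const_coeff 1 = 1"
  by (simp add: const_coeff_def pcoeff_1)

lemma const_coeff_mult [simp]: "const_coeff (a * b) = const_coeff a * const_coeff b"
  by (simp add: const_coeff_def pcoeff_mult fps_mult_splits splits_0)

lemma const_coeff_of_real [simp]: "const_coeff (of_real c) = c"
  by (simp add: const_coeff_def pcoeff_of_real)

lift_definition pvar :: "nat \<Rightarrow> pser" is var .

lemma pcoeff_pvar_mult:
  "pcoeff (pvar k * g) \<alpha> = (if Poly_Mapping.lookup \<alpha> k > 0 then pcoeff g (\<alpha> - mvar k) else 0)"
proof -
  have "pcoeff (pvar k * g) \<alpha> = (\<Sum>p\<in>splits \<alpha>. if fst p = mvar k then pcoeff g (snd p) else 0)"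
    by (simp add: pcoeff_mult fps_mult_splits pvar.rep_eq var_def) (rule sum.cong, auto)
  also have "\<dots> = (if Poly_Mapping.lookup \<alpha> k > 0 then pcoeff g (\<alpha> - mvar k) else 0)"
  proof (cases "Poly_Mapping.lookup \<alpha> k > 0")
    case True
    then have split: "mvar k + (\<alpha> - mvar k) = \<alpha>"
      by (metis minus_mvar_add add.commute)
    have "(\<Sum>p\<in>splits \<alpha>. if fst p = mvar k then pcoeff g (snd p) else 0)
        = (\<Sum>p\<in>splits \<alpha>. if p = (mvar k, \<alpha> - mvar k) then pcoeff g (snd p) else 0)"
      by (rule sum.cong) (auto simp: splits_def)
    also have "\<dots> = pcoeff g (\<alpha> - mvar k)"
      using sum.delta[OF finite_splits, of "(mvar k, \<alpha> - mvar k)" "\<lambda>p. pcoeff g (snd p)" \<alpha>] split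
      by (simp add: splits_def)
    finally show ?thesis using True by simp
  next
    case False
    then have "fst p \<noteq> mvar k" if "p \<in> splits \<alpha>" for p
      using that by (auto simp: splits_def lookup_add)
    then show ?thesis using False by (simp add: sum.neutral)
  qed
  finally show ?thesis .
qed

section \<open>Inverses and square roots\<close>

lemma splits_mdeg_snd_less: "p \<in> splits \<alpha> \<Longrightarrow> fst p \<noteq> 0 \<Longrightarrow> mdeg (snd p) < mdeg \<alpha>"
  by (auto simp: splits_def mdeg_add mdeg_eq_0_iff[symmetric])

lemma splits_mdeg_fst_less: "p \<in> splits \<alpha> \<Longrightarrow> snd p \<noteq> 0 \<Longrightarrow> mdeg (fst p) < mdeg \<alpha>"
  by (auto simp: splits_def mdeg_add mdeg_eq_0_iff[symmetric])

text \<open>Coefficients of the inverse and of the square root, solved for degree by degree from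
  \<open>f * g = 1\<close> and \<open>g * g = h\<close>.\<close>

function fps_inverse :: "fps \<Rightarrow> mon \<Rightarrow> real" where
  "fps_inverse f \<alpha> = (if \<alpha> = 0 then 1 / f 0 else
     - (\<Sum>p\<in>splits \<alpha>. if fst p = 0 then 0 else f (fst p) * fps_inverse f (snd p)) / f 0)"
  by auto
termination
  by (relation "measure (\<lambda>(f, \<alpha>). mdeg \<alpha>)") (auto intro: splits_mdeg_snd_less)

declare fps_inverse.simps [simp del]

function fps_sqrt :: "fps \<Rightarrow> mon \<Rightarrow> real" where
  "fps_sqrt h \<alpha> = (if \<alpha> = 0 then sqrt (h 0) else
     (h \<alpha> - (\<Sum>p\<in>splits \<alpha>. if fst p = 0 \<or> snd p = 0 then 0
                            else fps_sqrt h (fst p) * fps_sqrt h (snd p))) / (2 * sqrt (h 0)))"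
  by auto
termination
  by (relation "measure (\<lambda>(f, \<alpha>). mdeg \<alpha>)") (auto intro: splits_mdeg_snd_less splits_mdeg_fst_less)

declare fps_sqrt.simps [simp del]

lemma fps_mult_inverse:
  assumes "f 0 \<noteq> 0"
  shows "fps_mult f (fps_inverse f) \<alpha> = (if \<alpha> = 0 then 1 else 0)"
proof (cases "\<alpha> = 0")
  case True
  then show ?thesis using assms by (simp add: fps_mult_splits splits_0 fps_inverse.simps)
next
  case False
  let ?g = "\<lambda>p. f (fst p) * fps_inverse f (snd p)"
  have "fps_mult f (fps_inverse f) \<alpha>
      = (\<Sum>p\<in>splits \<alpha>. if fst p = 0 then ?g p else 0) + (\<Sum>p\<in>splits \<alpha>. if fst p = 0 then 0 else ?g p)"
    unfolding fps_mult_splits sum.distrib[symmetric] by (rule sum.cong) auto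
  also have "\<dots> = f 0 * fps_inverse f \<alpha> + (\<Sum>p\<in>splits \<alpha>. if fst p = 0 then 0 else ?g p)"
    by (simp add: sum_splits_fst_0)
  also have "\<dots> = 0"
    using assms False by (subst fps_inverse.simps) simp
  finally show ?thesis using False by simp
qed

lemma fps_mult_sqrt:
  assumes "h 0 > 0"
  shows "fps_mult (fps_sqrt h) (fps_sqrt h) \<alpha> = h \<alpha>"
proof (cases "\<alpha> = 0")
  case True
  then show ?thesis using assms by (simp add: fps_mult_splits splits_0 fps_sqrt.simps)
next
  case False
  let ?g = "\<lambda>p. fps_sqrt h (fst p) * fps_sqrt h (snd p)"
  have "fps_mult (fps_sqrt h) (fps_sqrt h) \<alpha>
      = (\<Sum>p\<in>splits \<alpha>. if fst p = 0 then ?g p else 0) + (\<Sum>p\<in>splits \<alpha>. if snd p = 0 then ?g p else 0)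
        + (\<Sum>p\<in>splits \<alpha>. if fst p = 0 \<or> snd p = 0 then 0 else ?g p)"
    unfolding fps_mult_splits sum.distrib[symmetric]
  proof (rule sum.cong)
    fix p assume "p \<in> splits \<alpha>"
    then have "\<not> (fst p = 0 \<and> snd p = 0)" using False by (auto simp: splits_def)
    then show "?g p = (if fst p = 0 then ?g p else 0) + (if snd p = 0 then ?g p else 0)
                      + (if fst p = 0 \<or> snd p = 0 then 0 else ?g p)"
      by auto
  qed simp
  also have "\<dots> = 2 * fps_sqrt h 0 * fps_sqrt h \<alpha> + (\<Sum>p\<in>splits \<alpha>. if fst p = 0 \<or> snd p = 0 then 0 else ?g p)"
    by (simp add: sum_splits_fst_0 sum_splits_snd_0)
  also have "\<dots> = h \<alpha>"
    using assms False by (subst (2) fps_sqrt.simps) (simp add: fps_sqrt.simps[of h 0])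
  finally show ?thesis .
qed

lift_definition pser_inverse :: "pser \<Rightarrow> pser" is fps_inverse .

lift_definition pser_sqrt :: "pser \<Rightarrow> pser" is fps_sqrt .

lemma pser_mult_inverse: "const_coeff a \<noteq> 0 \<Longrightarrow> a * pser_inverse a = 1"
  unfolding const_coeff_def by transfer (simp add: fun_eq_iff fps_mult_inverse)

lemma pser_sqrt_square: "const_coeff a > 0 \<Longrightarrow> pser_sqrt a * pser_sqrt a = a"
  unfolding const_coeff_def by transfer (simp add: fun_eq_iff fps_mult_sqrt)

lemma pser_pos_const_coeff_unit_square:
  assumes "const_coeff a > 0"
  shows "\<exists>s u. s * s = a \<and> s * u = 1"
proof -
  have "const_coeff (pser_sqrt a) * const_coeff (pser_sqrt a) = const_coeff a"
    using pser_sqrt_square[OF assms] by (metis const_coeff_mult)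
  then have "const_coeff (pser_sqrt a) \<noteq> 0" using assms by auto
  then show ?thesis using pser_sqrt_square[OF assms] pser_mult_inverse by blast
qed

abbreviation in_pvars :: "nat \<Rightarrow> pser \<Rightarrow> bool" where
  "in_pvars n a \<equiv> in_vars n (pcoeff a)"

lemma in_pvars_add:
  assumes "in_pvars n a" and "in_pvars n b"
  shows "in_pvars n (a + b)"
  unfolding in_vars_def
proof (intro allI impI)
  fix \<alpha> assume "pcoeff (a + b) \<alpha> \<noteq> 0"
  then have "pcoeff a \<alpha> \<noteq> 0 \<or> pcoeff b \<alpha> \<noteq> 0" by auto
  then show "Poly_Mapping.keys \<alpha> \<subseteq> {..<n}" using assms by (auto simp: in_vars_def)
qed

lemma in_pvars_0: "in_pvars n 0"
  by (simp add: in_vars_def)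

lemma in_pvars_of_real: "in_pvars n (of_real c)"
  by (simp add: in_vars_def pcoeff_of_real)

lemma in_pvars_pvar: "k < n \<Longrightarrow> in_pvars n (pvar k)"
  by (simp add: in_vars_def pvar.rep_eq var_def)

lemma in_pvars_mult:
  assumes a: "in_pvars n a" and b: "in_pvars n b"
  shows "in_pvars n (a * b)"
  unfolding in_vars_def
proof (intro allI impI)
  fix \<alpha> assume "pcoeff (a * b) \<alpha> \<noteq> 0"
  then obtain p where p: "p \<in> splits \<alpha>" "pcoeff a (fst p) * pcoeff b (snd p) \<noteq> 0"
    by (auto simp: pcoeff_mult fps_mult_splits elim: sum.not_neutral_contains_not_neutral)
  then have "Poly_Mapping.keys (fst p) \<subseteq> {..<n}" "Poly_Mapping.keys (snd p) \<subseteq> {..<n}"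
    using a b by (auto simp: in_vars_def)
  moreover have "\<alpha> = fst p + snd p" using p(1) by (auto simp: splits_def)
  ultimately show "Poly_Mapping.keys \<alpha> \<subseteq> {..<n}" by (simp add: keys_add_mon)
qed

lemma in_pvars_sum: "(\<And>x. x \<in> S \<Longrightarrow> in_pvars n (g x)) \<Longrightarrow> in_pvars n (sum g S)"
  by (induction S rule: infinite_finite_induct) (auto intro: in_pvars_add in_pvars_0)

lift_definition restrict_pvars :: "nat \<Rightarrow> pser \<Rightarrow> pser" is
  "\<lambda>n f \<alpha>. if Poly_Mapping.keys \<alpha> \<subseteq> {..<n} then f \<alpha> else 0" .

lemma restrict_pvars_add: "restrict_pvars n (a + b) = restrict_pvars n a + restrict_pvars n b"
  by transfer auto

lemma restrict_pvars_0: "restrict_pvars n 0 = 0"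
  by transfer simp

lemma restrict_pvars_sum: "restrict_pvars n (sum g S) = (\<Sum>x\<in>S. restrict_pvars n (g x))"
  by (induction S rule: infinite_finite_induct) (auto simp: restrict_pvars_add restrict_pvars_0)

lemma restrict_pvars_id: "in_pvars n a \<Longrightarrow> restrict_pvars n a = a"
  by (rule pcoeff_inject[THEN iffD1]) (auto simp: restrict_pvars.rep_eq in_vars_def fun_eq_iff)

lemma in_pvars_restrict_pvars: "in_pvars n (restrict_pvars n a)"
  by (simp add: in_vars_def restrict_pvars.rep_eq)

lemma restrict_pvars_mult: "restrict_pvars n (a * b) = restrict_pvars n a * restrict_pvars n b"
proof (transfer, rule ext)
  fix n f g \<alpha>
  show "(if Poly_Mapping.keys \<alpha> \<subseteq> {..<n} then fps_mult f g \<alpha> else 0)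
      = fps_mult (\<lambda>\<alpha>. if Poly_Mapping.keys \<alpha> \<subseteq> {..<n} then f \<alpha> else 0)
                 (\<lambda>\<alpha>. if Poly_Mapping.keys \<alpha> \<subseteq> {..<n} then g \<alpha> else 0) \<alpha>"
    unfolding fps_mult_splits
    by (auto simp: splits_def keys_add_mon intro!: sum.cong sum.neutral)
qed

section \<open>Quadratic modules\<close>

lemma sum_lessThan_add: "(\<Sum>j<(a::nat) + b. g j) = (\<Sum>j<a. g j) + (\<Sum>j<b. g (j + a))"
  by (induction b) (simp_all add: ac_simps)

definition sum_of_squares :: "'a::comm_ring_1 \<Rightarrow> bool" where
  "sum_of_squares s \<longleftrightarrow> (\<exists>(K::nat) g. s = (\<Sum>k<K. g k * g k))"

definition qmodule :: "'a::comm_ring_1 set \<Rightarrow> 'a set" where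
  "qmodule G = {F. \<exists>(J::nat) s q. (\<forall>j<J. sum_of_squares (s j) \<and> q j \<in> G) \<and> F = (\<Sum>j<J. s j * q j)}"

lemma sum_of_squares_sum: "sum_of_squares (\<Sum>k<(K::nat). g k * g k)"
  unfolding sum_of_squares_def by blast

lemma qmodule_0: "0 \<in> qmodule G"
  unfolding qmodule_def by (intro CollectI exI[of _ 0]) simp

lemma sum_of_squares_mult_in_qmodule: "sum_of_squares s \<Longrightarrow> q \<in> G \<Longrightarrow> s * q \<in> qmodule G"
  unfolding qmodule_def by (intro CollectI exI[of _ 1] exI[of _ "\<lambda>_. s"] exI[of _ "\<lambda>_. q"]) simp

lemma sum_of_squares_in_qmodule: "1 \<in> G \<Longrightarrow> sum_of_squares s \<Longrightarrow> s \<in> qmodule G"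
  using sum_of_squares_mult_in_qmodule[of s 1 G] by simp

lemma qmodule_add:
  assumes "F \<in> qmodule G" and "F' \<in> qmodule G"
  shows "F + F' \<in> qmodule G"
proof -
  obtain J :: nat and s q where J: "\<forall>j<J. sum_of_squares (s j) \<and> q j \<in> G" "F = (\<Sum>j<J. s j * q j)"
    using assms(1) unfolding qmodule_def by blast
  obtain J' :: nat and s' q' where J': "\<forall>j<J'. sum_of_squares (s' j) \<and> q' j \<in> G" "F' = (\<Sum>j<J'. s' j * q' j)"
    using assms(2) unfolding qmodule_def by blast
  define t where "t j = (if j < J then s j else s' (j - J))" for j
  define p where "p j = (if j < J then q j else q' (j - J))" for j
  have "F + F' = (\<Sum>j<J + J'. t j * p j)"
    using J(2) J'(2) by (simp add: sum_lessThan_add t_def p_def)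
  moreover have "\<forall>j<J + J'. sum_of_squares (t j) \<and> p j \<in> G"
    using J(1) J'(1) by (auto simp: t_def p_def)
  ultimately show ?thesis
    unfolding qmodule_def by blast
qed

lemma qmodule_sum: "(\<And>x. x \<in> S \<Longrightarrow> g x \<in> qmodule G) \<Longrightarrow> sum g S \<in> qmodule G"
  by (induction S rule: infinite_finite_induct) (auto intro: qmodule_add qmodule_0)

lemma pos_const_coeff_sum_of_squares: "const_coeff s > 0 \<Longrightarrow> sum_of_squares s"
  unfolding sum_of_squares_def
  by (intro exI[of _ 1] exI[of _ "\<lambda>_. pser_sqrt s"]) (simp add: pser_sqrt_square)

definition QM_ser :: "nat \<Rightarrow> nat \<Rightarrow> pser set" where
  "QM_ser n d = qmodule {q. in_pvars n q \<and> pcoeff q \<in> QM n d}"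

lemma QM_ser_add: "F \<in> QM_ser n d \<Longrightarrow> G \<in> QM_ser n d \<Longrightarrow> F + G \<in> QM_ser n d"
  unfolding QM_ser_def by (rule qmodule_add)

lemma QM_ser_sum: "(\<And>x. x \<in> S \<Longrightarrow> g x \<in> QM_ser n d) \<Longrightarrow> sum g S \<in> QM_ser n d"
  unfolding QM_ser_def by (rule qmodule_sum)

lemma pcoeff_1_in_QM: "pcoeff 1 \<in> QM n d"
proof -
  have "{\<alpha>. pcoeff 1 \<alpha> \<noteq> 0} = {0}"
    by (auto simp: pcoeff_1)
  then have "is_poly n (pcoeff 1)"
    by (simp add: is_poly_def in_vars_def pcoeff_1)
  moreover have "pcoeff 1 = (\<lambda>\<alpha>. \<Sum>k<(1::nat). fps_mult (pcoeff 1) (pcoeff 1) \<alpha>)"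
    by (simp add: pcoeff_mult[symmetric])
  ultimately have "sos_poly n (pcoeff 1)"
    unfolding sos_poly_def by (intro exI[of _ 1] exI[of _ "\<lambda>_. pcoeff 1"]) simp
  then show ?thesis
    unfolding QM_def by (intro CollectI exI[of _ "pcoeff 1"] exI[of _ 0]) simp
qed

lemma sum_of_squares_in_QM_ser: "sum_of_squares s \<Longrightarrow> s \<in> QM_ser n d"
  unfolding QM_ser_def
  by (rule sum_of_squares_in_qmodule) (simp_all add: in_vars_def pcoeff_1 pcoeff_1_in_QM)

text \<open>Restricting to the variables \<open>v\<^sub>1, \<dots>, v\<^sub>n\<close> is a ring homomorphism fixing the generators,
  so it moves the sum-of-squares weights into \<open>\<real>[[v\<^sub>1, \<dots>, v\<^sub>n]]\<close>.\<close>

lemma pcoeff_in_QM_hat: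
  assumes F: "F \<in> QM_ser n d" and "in_pvars n F"
  shows "pcoeff F \<in> QM_hat n d"
proof -
  obtain J :: nat and s q where
    J: "\<forall>j<J. sum_of_squares (s j) \<and> in_pvars n (q j) \<and> pcoeff (q j) \<in> QM n d"
    and F_eq: "F = (\<Sum>j<J. s j * q j)"
    using F unfolding QM_ser_def qmodule_def by blast
  have "F = restrict_pvars n F"
    using \<open>in_pvars n F\<close> by (simp add: restrict_pvars_id)
  also have "\<dots> = (\<Sum>j<J. restrict_pvars n (s j) * q j)"
    unfolding F_eq using J by (simp add: restrict_pvars_sum restrict_pvars_mult restrict_pvars_id)
  finally have F_restr: "F = (\<Sum>j<J. restrict_pvars n (s j) * q j)" .
  have "sos_fps n (pcoeff (restrict_pvars n (s j)))" if "j < J" for j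
  proof -
    obtain K :: nat and g where g: "s j = (\<Sum>k<K. g k * g k)"
      using J \<open>j < J\<close> unfolding sum_of_squares_def by blast
    have "pcoeff (restrict_pvars n (s j))
        = (\<lambda>\<alpha>. \<Sum>k<K. fps_mult (pcoeff (restrict_pvars n (g k))) (pcoeff (restrict_pvars n (g k))) \<alpha>)"
      by (simp add: g restrict_pvars_sum restrict_pvars_mult fun_eq_iff pcoeff_sum pcoeff_mult)
    then show ?thesis
      unfolding sos_fps_def using in_pvars_restrict_pvars
      by (intro exI[of _ K] exI[of _ "\<lambda>k. pcoeff (restrict_pvars n (g k))"]) simp
  qed
  moreover have "pcoeff F = (\<lambda>\<alpha>. \<Sum>j<J. fps_mult (pcoeff (restrict_pvars n (s j))) (pcoeff (q j)) \<alpha>)"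
    by (subst F_restr) (simp add: fun_eq_iff pcoeff_sum pcoeff_mult)
  ultimately show ?thesis
    unfolding QM_hat_def using J
    by (intro CollectI exI[of _ J] exI[of _ "\<lambda>j. pcoeff (restrict_pvars n (s j))"]
          exI[of _ "\<lambda>j. pcoeff (q j)"]) simp
qed

section \<open>Positive definite forms\<close>

definition quad_form :: "nat \<Rightarrow> (nat \<Rightarrow> nat \<Rightarrow> real) \<Rightarrow> (nat \<Rightarrow> real) \<Rightarrow> real" where
  "quad_form d C x = (\<Sum>i<d. \<Sum>j<d. x i * C i j * x j)"

lemma pos_def_iff_quad_form:
  "pos_def d C \<longleftrightarrow> (\<forall>i<d. \<forall>j<d. C i j = C j i) \<and> (\<forall>x. (\<exists>i<d. x i \<noteq> 0) \<longrightarrow> quad_form d C x > 0)"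
  by (simp add: pos_def_def quad_form_def)

lemma quad_form_Suc:
  assumes sym: "\<forall>i<Suc d. \<forall>j<Suc d. C i j = C j i"
  shows "quad_form (Suc d) C x = quad_form d C x + 2 * x d * (\<Sum>i<d. x i * C i d) + C d d * (x d)\<^sup>2"
proof -
  have "(\<Sum>j<d. x d * C d j * x j) = x d * (\<Sum>i<d. x i * C i d)"
    using sym by (auto simp: sum_distrib_left intro!: sum.cong)
  moreover have "(\<Sum>i<d. x i * C i d * x d) = x d * (\<Sum>i<d. x i * C i d)"
    by (auto simp: sum_distrib_left sum_distrib_right intro!: sum.cong)
  moreover have "quad_form (Suc d) C x = quad_form d C x + (\<Sum>i<d. x i * C i d * x d)
      + ((\<Sum>j<d. x d * C d j * x j) + x d * C d d * x d)"
    by (simp add: quad_form_def sum.distrib)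
  ultimately show ?thesis
    by (simp add: power2_eq_square)
qed

lemma quad_form_Suc_schur:
  assumes sym: "\<forall>i<Suc d. \<forall>j<Suc d. C i j = C j i" and "C d d \<noteq> 0"
  shows "quad_form (Suc d) C x = quad_form d (\<lambda>i j. C i j - C i d * C d j / C d d) x
           + (C d d * x d + (\<Sum>i<d. x i * C i d))\<^sup>2 / C d d"
proof -
  let ?a = "\<Sum>i<d. x i * C i d"
  have "quad_form d (\<lambda>i j. C i j - C i d * C d j / C d d) x
      = (\<Sum>i<d. \<Sum>j<d. x i * C i j * x j - (x i * C i d) * (x j * C j d) / C d d)"
    unfolding quad_form_def using sym by (intro sum.cong refl) (simp add: field_simps)
  also have "\<dots> = quad_form d C x - (\<Sum>i<d. \<Sum>j<d. (x i * C i d) * (x j * C j d)) / C d d"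
    by (simp add: quad_form_def sum_subtractf sum_divide_distrib)
  also have "(\<Sum>i<d. \<Sum>j<d. (x i * C i d) * (x j * C j d)) = ?a * ?a"
    by (simp add: sum_product)
  finally show ?thesis
    using \<open>C d d \<noteq> 0\<close> by (simp add: quad_form_Suc[OF sym] power2_eq_square field_simps)
qed

lemma pos_def_Suc_last_pos:
  assumes "pos_def (Suc d) C"
  shows "C d d > 0"
proof -
  let ?e = "\<lambda>i. if i = d then 1 else 0 :: real"
  have sym: "\<forall>i<Suc d. \<forall>j<Suc d. C i j = C j i"
    using assms by (simp add: pos_def_iff_quad_form)
  have "quad_form (Suc d) C ?e > 0"
    using assms unfolding pos_def_iff_quad_form by auto
  moreover have "quad_form d C ?e = 0"
    unfolding quad_form_def by (intro sum.neutral ballI) auto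
  moreover have "(\<Sum>i<d. ?e i * C i d) = 0"
    by (intro sum.neutral ballI) auto
  ultimately show ?thesis
    unfolding quad_form_Suc[OF sym] by simp
qed

lemma pos_def_schur_complement:
  assumes pd: "pos_def (Suc d) C"
  shows "pos_def d (\<lambda>i j. C i j - C i d * C d j / C d d)"
  unfolding pos_def_iff_quad_form
proof (intro conjI allI impI)
  have sym: "\<forall>i<Suc d. \<forall>j<Suc d. C i j = C j i"
    using pd by (simp add: pos_def_iff_quad_form)
  then show "C i j - C i d * C d j / C d d = C j i - C j d * C d i / C d d" if "i < d" "j < d" for i j
    using that by (simp add: mult.commute)
  have c: "C d d > 0" using pos_def_Suc_last_pos[OF pd] .
  fix x :: "nat \<Rightarrow> real" assume "\<exists>i<d. x i \<noteq> 0"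
  then obtain i0 where i0: "i0 < d" "x i0 \<noteq> 0" by blast
  \<comment> \<open>choose the last coordinate so that the completed square vanishes\<close>
  define y where "y = x(d := - (\<Sum>i<d. x i * C i d) / C d d)"
  have y_eq: "y i = x i" if "i < d" for i
    using that by (simp add: y_def)
  have "(\<Sum>i<d. y i * C i d) = (\<Sum>i<d. x i * C i d)" by (simp add: y_eq)
  then have sq0: "C d d * y d + (\<Sum>i<d. y i * C i d) = 0" using c by (simp add: y_def)
  have "\<exists>i<Suc d. y i \<noteq> 0" using i0 y_eq[OF i0(1)] by (intro exI[of _ i0]) auto
  then have "quad_form (Suc d) C y > 0"
    using pd unfolding pos_def_iff_quad_form by blast
  then have "quad_form d (\<lambda>i j. C i j - C i d * C d j / C d d) y > 0"
    using quad_form_Suc_schur[OF sym, of y] c sq0 by simp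
  moreover have "quad_form d (\<lambda>i j. C i j - C i d * C d j / C d d) y
      = quad_form d (\<lambda>i j. C i j - C i d * C d j / C d d) x"
    unfolding quad_form_def by (simp add: y_eq)
  ultimately show "quad_form d (\<lambda>i j. C i j - C i d * C d j / C d d) x > 0" by simp
qed

lemma quad_form_Suc_lower_bound:
  assumes sym: "\<forall>i<Suc d. \<forall>j<Suc d. C i j = C j i" and c: "C d d > 0" and "\<delta>' > 0"
    and schur: "\<forall>x. \<delta>' * (\<Sum>i<d. (x i)\<^sup>2) \<le> quad_form d (\<lambda>i j. C i j - C i d * C d j / C d d) x"
  shows "\<exists>\<delta>>0. \<forall>x. \<delta> * (\<Sum>i<Suc d. (x i)\<^sup>2) \<le> quad_form (Suc d) C x"
proof -
  define A where "A = (\<Sum>i<d. (C i d)\<^sup>2)"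
  define \<delta> where "\<delta> = min (\<delta>' / (1 + 2 * A / (C d d)\<^sup>2)) (C d d / 2)"
  have den: "1 + 2 * A / (C d d)\<^sup>2 > 0" by (simp add: A_def add_pos_nonneg sum_nonneg)
  have \<delta>_pos: "\<delta> > 0" using \<open>\<delta>' > 0\<close> den c by (simp add: \<delta>_def)
  have \<delta>_le1: "\<delta> * (1 + 2 * A / (C d d)\<^sup>2) \<le> \<delta>'"
    using den by (simp add: \<delta>_def min_def divide_simps split: if_splits)
  have \<delta>_le2: "2 * \<delta> / C d d \<le> 1" using c by (simp add: \<delta>_def min_def divide_simps split: if_splits)
  have "\<delta> * (\<Sum>i<Suc d. (x i)\<^sup>2) \<le> quad_form (Suc d) C x" for x
  proof -
    define a where "a = (\<Sum>i<d. x i * C i d)"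
    define X where "X = (\<Sum>i<d. (x i)\<^sup>2)"
    define T where "T = (C d d * x d + a)\<^sup>2 / C d d"
    have X0: "X \<ge> 0" by (simp add: X_def sum_nonneg)
    have T0: "T \<ge> 0" using c by (simp add: T_def)
    have lower: "\<delta>' * X + T \<le> quad_form (Suc d) C x"
      using quad_form_Suc_schur[OF sym, of x] c schur by (simp add: T_def a_def X_def)
    have "(C d d * x d)\<^sup>2 \<le> 2 * (C d d * x d + a)\<^sup>2 + 2 * a\<^sup>2"
      using sum_squares_ge_zero[of "(C d d * x d + a) + a" 0] by (simp add: power2_eq_square algebra_simps)
    also have "(C d d * x d + a)\<^sup>2 = C d d * T" using c by (simp add: T_def)
    also have "a\<^sup>2 \<le> X * A"
      unfolding a_def X_def A_def by (rule Cauchy_Schwarz_ineq_sum)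
    finally have "(C d d)\<^sup>2 * (x d)\<^sup>2 \<le> 2 * C d d * T + 2 * (X * A)" by (simp add: power_mult_distrib)
    then have xd: "(x d)\<^sup>2 \<le> (2 * C d d * T + 2 * (X * A)) / (C d d)\<^sup>2" using c by (simp add: field_simps)
    have "\<delta> * (\<Sum>i<Suc d. (x i)\<^sup>2) = \<delta> * X + \<delta> * (x d)\<^sup>2" by (simp add: X_def algebra_simps)
    also have "\<dots> \<le> \<delta> * X + \<delta> * ((2 * C d d * T + 2 * (X * A)) / (C d d)\<^sup>2)"
      using mult_left_mono[OF xd, of \<delta>] \<delta>_pos by simp
    also have "\<dots> = (\<delta> * (1 + 2 * A / (C d d)\<^sup>2)) * X + (2 * \<delta> / C d d) * T"
      using c by (simp add: field_simps power2_eq_square)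
    also have "\<dots> \<le> \<delta>' * X + 1 * T"
      by (intro add_mono mult_right_mono \<delta>_le1 \<delta>_le2 X0 T0)
    finally show ?thesis using lower by simp
  qed
  then show ?thesis using \<delta>_pos by blast
qed

lemma pos_def_quad_form_ge:
  "pos_def d C \<Longrightarrow> \<exists>\<delta>>0. \<forall>x. \<delta> * (\<Sum>i<d. (x i)\<^sup>2) \<le> quad_form d C x"
proof (induction d arbitrary: C)
  case 0
  then show ?case by (intro exI[of _ 1]) (simp add: quad_form_def)
next
  case (Suc d)
  have sym: "\<forall>i<Suc d. \<forall>j<Suc d. C i j = C j i"
    using Suc.prems by (simp add: pos_def_iff_quad_form)
  obtain \<delta>' where "\<delta>' > 0" "\<forall>x. \<delta>' * (\<Sum>i<d. (x i)\<^sup>2) \<le> quad_form d (\<lambda>i j. C i j - C i d * C d j / C d d) x"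
    using Suc.IH[OF pos_def_schur_complement[OF Suc.prems]] by blast
  then show ?case
    using quad_form_Suc_lower_bound[OF sym pos_def_Suc_last_pos[OF Suc.prems]] by blast
qed

lemma pos_def_minus_diag:
  assumes "pos_def d C"
  shows "\<exists>\<delta>>0. \<forall>\<mu><\<delta>. pos_def d (\<lambda>i j. C i j - (if i = j then \<mu> else 0))"
proof -
  obtain \<delta> where \<delta>: "\<delta> > 0" "\<forall>x. \<delta> * (\<Sum>i<d. (x i)\<^sup>2) \<le> quad_form d C x"
    using pos_def_quad_form_ge[OF assms] by blast
  have "pos_def d (\<lambda>i j. C i j - (if i = j then \<mu> else 0))" if "\<mu> < \<delta>" for \<mu>
    unfolding pos_def_iff_quad_form
  proof (intro conjI allI impI)
    show "C i j - (if i = j then \<mu> else 0) = C j i - (if j = i then \<mu> else 0)" if "i < d" "j < d" for i j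
      using assms that by (simp add: pos_def_iff_quad_form)
    fix x :: "nat \<Rightarrow> real" assume "\<exists>i<d. x i \<noteq> 0"
    then obtain i where i: "i < d" "x i \<noteq> 0" by blast
    have "0 < (x i)\<^sup>2" using i by simp
    also have "(x i)\<^sup>2 \<le> (\<Sum>i<d. (x i)\<^sup>2)" using i by (intro member_le_sum) auto
    finally have pos: "(\<Sum>i<d. (x i)\<^sup>2) > 0" .
    have "quad_form d (\<lambda>i j. C i j - (if i = j then \<mu> else 0)) x
        = (\<Sum>i<d. \<Sum>j<d. x i * C i j * x j - (if i = j then \<mu> * (x i)\<^sup>2 else 0))"
      unfolding quad_form_def by (intro sum.cong refl) (auto simp: algebra_simps power2_eq_square)
    also have "\<dots> = quad_form d C x - \<mu> * (\<Sum>i<d. (x i)\<^sup>2)"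
      by (simp add: quad_form_def sum_subtractf sum_distrib_left)
    also have "\<dots> \<ge> (\<delta> - \<mu>) * (\<Sum>i<d. (x i)\<^sup>2)"
      using \<delta>(2) by (simp add: algebra_simps)
    finally have "(\<delta> - \<mu>) * (\<Sum>i<d. (x i)\<^sup>2) \<le> quad_form d (\<lambda>i j. C i j - (if i = j then \<mu> else 0)) x" .
    moreover have "(\<delta> - \<mu>) * (\<Sum>i<d. (x i)\<^sup>2) > 0" using pos \<open>\<mu> < \<delta>\<close> by simp
    ultimately show "quad_form d (\<lambda>i j. C i j - (if i = j then \<mu> else 0)) x > 0" by linarith
  qed
  then show ?thesis using \<delta>(1) by blast
qed

section \<open>Cholesky factorisation\<close>

lemma gram_factorization_Suc:
  fixes Q :: "nat \<Rightarrow> nat \<Rightarrow> 'a::comm_ring_1"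
  assumes sym: "\<forall>i<Suc d. \<forall>j<Suc d. Q i j = Q j i" and u: "Q d d * (u * u) = 1"
    and L': "\<forall>i<d. \<forall>j<d. Q i j - Q i d * Q d j * (u * u) = (\<Sum>t<d. L' t i * L' t j)"
  shows "\<exists>L. \<forall>i<Suc d. \<forall>j<Suc d. Q i j = (\<Sum>t<Suc d. L t i * L t j)"
proof -
  define L where "L t i = (if t < d then (if i < d then L' t i else 0) else Q i d * u)" for t i
  have "Q i j = (\<Sum>t<Suc d. L t i * L t j)" if "i < Suc d" "j < Suc d" for i j
  proof -
    have last: "L d i * L d j = Q i d * Q j d * (u * u)" by (simp add: L_def mult_ac)
    show ?thesis
    proof (cases "i < d \<and> j < d")
      case True
      then have "(\<Sum>t<d. L t i * L t j) = Q i j - Q i d * Q d j * (u * u)" using L' by (simp add: L_def)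
      then show ?thesis using True sym last by simp
    next
      case False
      then have "(\<Sum>t<d. L t i * L t j) = 0" by (auto simp: L_def intro!: sum.neutral)
      moreover have "Q i d * Q j d * (u * u) = Q i j"
      proof (cases "i = d")
        case True
        then have "Q i d * Q j d * (u * u) = Q j d * (Q d d * (u * u))" by (simp add: mult_ac)
        then show ?thesis using True u sym that by simp
      next
        case False
        then have "j = d" using \<open>\<not> (i < d \<and> j < d)\<close> that by auto
        then have "Q i d * Q j d * (u * u) = Q i d * (Q d d * (u * u))" by (simp add: mult_ac)
        then show ?thesis using \<open>j = d\<close> u by simp
      qed
      ultimately show ?thesis using last by simp
    qed
  qed
  then show ?thesis by blast
qed

locale square_root_hom =
  fixes h :: "'a::comm_ring_1 \<Rightarrow> real"
  assumes hom_add: "h (a + b) = h a + h b"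
    and hom_mult: "h (a * b) = h a * h b"
    and hom_1: "h 1 = 1"
    and pos_unit_square: "h a > 0 \<Longrightarrow> \<exists>s u. s * s = a \<and> s * u = 1"
begin

lemma hom_diff: "h (a - b) = h a - h b"
  using hom_add[of "a - b" b] by simp

lemma cholesky:
  "(\<forall>i<d. \<forall>j<d. Q i j = Q j i) \<Longrightarrow> pos_def d (\<lambda>i j. h (Q i j)) \<Longrightarrow>
     \<exists>L. \<forall>i<d. \<forall>j<d. Q i j = (\<Sum>t<d. L t i * L t j)"
proof (induction d arbitrary: Q)
  case 0
  then show ?case by simp
next
  case (Suc d)
  note symQ = Suc.prems(1) and pd = Suc.prems(2)
  have hQ_pos: "h (Q d d) > 0"
    using pos_def_Suc_last_pos[OF pd] by simp
  obtain s u where su: "s * s = Q d d" "s * u = 1"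
    using pos_unit_square[OF hQ_pos] by blast
  have "h (Q d d) * h (u * u) = h ((s * u) * (s * u))"
    unfolding su(1)[symmetric] hom_mult[symmetric] by (simp add: ac_simps)
  then have h_uu: "h (u * u) = 1 / h (Q d d)"
    using hQ_pos by (simp add: su(2) hom_1 field_simps)
  have "Q d d * (u * u) = (s * u) * (s * u)"
    unfolding su(1)[symmetric] by (simp add: ac_simps)
  then have Q_uu: "Q d d * (u * u) = 1"
    using su(2) by simp
  define S where "S i j = Q i j - Q i d * Q d j * (u * u)" for i j
  have symS: "\<forall>i<d. \<forall>j<d. S i j = S j i"
    using symQ by (auto simp: S_def mult.commute)
  have "(\<lambda>i j. h (S i j)) = (\<lambda>i j. h (Q i j) - h (Q i d) * h (Q d j) / h (Q d d))"
    using h_uu by (auto simp: S_def hom_diff hom_mult)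
  then have "pos_def d (\<lambda>i j. h (S i j))"
    using pos_def_schur_complement[OF pd] by simp
  then obtain L' where "\<forall>i<d. \<forall>j<d. S i j = (\<Sum>t<d. L' t i * L' t j)"
    using Suc.IH[OF symS] by blast
  then show ?case
    using gram_factorization_Suc[OF symQ Q_uu] unfolding S_def by blast
qed

lemma quad_form_sum_of_squares:
  assumes "\<forall>k<d. \<forall>l<d. Q k l = Q l k" and "pos_def d (\<lambda>k l. h (Q k l))"
  shows "sum_of_squares (\<Sum>k<d. \<Sum>l<d. Y k * Y l * Q k l)"
proof -
  obtain L where L: "\<forall>k<d. \<forall>l<d. Q k l = (\<Sum>t<d. L t k * L t l)"
    using cholesky[OF assms] by blast
  have "(\<Sum>t<d. (\<Sum>k<d. L t k * Y k) * (\<Sum>k<d. L t k * Y k))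
      = (\<Sum>t<d. \<Sum>k<d. \<Sum>l<d. (L t k * Y k) * (L t l * Y l))"
    by (simp only: sum_product)
  also have "\<dots> = (\<Sum>k<d. \<Sum>t<d. \<Sum>l<d. (L t k * Y k) * (L t l * Y l))"
    by (rule sum.swap)
  also have "\<dots> = (\<Sum>k<d. \<Sum>l<d. \<Sum>t<d. (L t k * Y k) * (L t l * Y l))"
    by (intro sum.cong refl sum.swap)
  also have "\<dots> = (\<Sum>k<d. \<Sum>l<d. Y k * Y l * (\<Sum>t<d. L t k * L t l))"
    by (intro sum.cong refl) (simp add: sum_distrib_left ac_simps)
  also have "\<dots> = (\<Sum>k<d. \<Sum>l<d. Y k * Y l * Q k l)"
    using L by (intro sum.cong refl) simp
  finally have "(\<Sum>k<d. \<Sum>l<d. Y k * Y l * Q k l) = (\<Sum>t<d. (\<Sum>k<d. L t k * Y k) * (\<Sum>k<d. L t k * Y k))"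
    by simp
  then show ?thesis
    by (simp only: sum_of_squares_sum)
qed

end

interpretation real_id: square_root_hom "\<lambda>x::real. x"
proof
  show "\<exists>s u. s * s = a \<and> s * u = 1" if "a > 0" for a :: real
    using that by (intro exI[of _ "sqrt a"] exI[of _ "1 / sqrt a"]) simp
qed simp_all

interpretation const_coeff: square_root_hom const_coeff
proof
  show "\<exists>s u. s * s = a \<and> s * u = 1" if "const_coeff a > 0" for a
    using that by (rule pser_pos_const_coeff_unit_square)
qed simp_all

definition row_start :: "nat \<Rightarrow> nat \<Rightarrow> nat" where
  "row_start d i = (\<Sum>k<i. d - k)"

lemma row_start_mono: "i \<le> i' \<Longrightarrow> row_start d i \<le> row_start d i'"
  unfolding row_start_def by (rule sum_mono2) auto

lemma row_start_self: "row_start d d = sigma d"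
proof -
  have "row_start d d = (\<Sum>k<d. Suc (d - Suc k))"
    unfolding row_start_def by (rule sum.cong) auto
  also have "\<dots> = (\<Sum>k<d. Suc k)"
    by (rule sum.nat_diff_reindex)
  moreover have "2 * (\<Sum>k<d. Suc k) = d * Suc d"
    by (induction d) auto
  ultimately have "2 * row_start d d = d * Suc d"
    by simp
  then show ?thesis unfolding sigma_def by simp
qed

lemma vidx_le: "i \<le> j \<Longrightarrow> vidx d i j = row_start d i + (j - i)"
  by (simp add: vidx_def row_start_def)

lemma vidx_commute: "vidx d i j = vidx d j i"
  by (auto simp: vidx_def)

lemma vidx_less_sigma: "i < d \<Longrightarrow> j < d \<Longrightarrow> vidx d i j < sigma d"
proof -
  have *: "vidx d i j < sigma d" if "i \<le> j" "j < d" for i j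
  proof -
    have "vidx d i j < row_start d (Suc i)" using that by (simp add: vidx_le row_start_def)
    also have "\<dots> \<le> row_start d d" using that by (intro row_start_mono) simp
    finally show ?thesis by (simp add: row_start_self)
  qed
  assume "i < d" "j < d"
  then show ?thesis using *[of i j] *[of j i] vidx_commute[of d i j] by (cases "i \<le> j") auto
qed

definition upper_pairs :: "nat \<Rightarrow> (nat \<times> nat) set" where
  "upper_pairs d = {(i, j). i \<le> j \<and> j < d}"

lemma finite_upper_pairs: "finite (upper_pairs d)"
  by (rule finite_subset[of _ "{..<d} \<times> {..<d}"]) (auto simp: upper_pairs_def)

lemma card_upper_pairs: "2 * card (upper_pairs d) = d * Suc d"
proof (induction d)
  case 0
  then show ?case by (simp add: upper_pairs_def)
next
  case (Suc d)
  have "upper_pairs (Suc d) = upper_pairs d \<union> (\<lambda>i. (i, d)) ` {..d}"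
    by (auto simp: upper_pairs_def)
  then have "card (upper_pairs (Suc d)) = card (upper_pairs d) + card ((\<lambda>i. (i, d)) ` {..d})"
    by (simp only:) (rule card_Un_disjoint[OF finite_upper_pairs], auto simp: upper_pairs_def)
  also have "card ((\<lambda>i. (i, d)) ` {..d}) = Suc d"
    by (subst card_image) (auto simp: inj_on_def)
  finally show ?case using Suc by simp
qed

lemma inj_on_vidx: "inj_on (\<lambda>(i, j). vidx d i j) (upper_pairs d)"
proof -
  have less: "vidx d i j < vidx d i' j'" if "i < i'" "i \<le> j" "j < d" "i' \<le> j'" for i j i' j'
  proof -
    have "vidx d i j < row_start d (Suc i)" using that by (simp add: vidx_le row_start_def)
    also have "\<dots> \<le> row_start d i'" using that by (intro row_start_mono) simp
    also have "\<dots> \<le> vidx d i' j'" using that by (simp add: vidx_le)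
    finally show ?thesis .
  qed
  show ?thesis
  proof (rule inj_onI, clarify)
    fix i j i' j'
    assume ij: "(i, j) \<in> upper_pairs d" "(i', j') \<in> upper_pairs d" "vidx d i j = vidx d i' j'"
    then have "i = i'"
      using less[of i i' j j'] less[of i' i j' j] by (cases i i' rule: linorder_cases) (auto simp: upper_pairs_def)
    then show "i = i' \<and> j = j'" using ij by (auto simp: upper_pairs_def vidx_le)
  qed
qed

lemma bij_betw_vidx: "bij_betw (\<lambda>(i, j). vidx d i j) (upper_pairs d) {..<sigma d}"
proof -
  have "(\<lambda>(i, j). vidx d i j) ` upper_pairs d \<subseteq> {..<sigma d}"
    by (auto simp: upper_pairs_def intro!: vidx_less_sigma)
  moreover have "card ((\<lambda>(i, j). vidx d i j) ` upper_pairs d) = sigma d"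
    using card_image[OF inj_on_vidx] card_upper_pairs[of d] by (simp add: sigma_def)
  ultimately have "(\<lambda>(i, j). vidx d i j) ` upper_pairs d = {..<sigma d}"
    by (intro card_subset_eq) auto
  then show ?thesis using inj_on_vidx by (simp add: bij_betw_def)
qed

lemma vidx_eq_iff:
  assumes "a < d" "b < d" "i < d" "j < d"
  shows "vidx d a b = vidx d i j \<longleftrightarrow> (a = i \<and> b = j) \<or> (a = j \<and> b = i)"
proof
  have ordered: "vidx d x y = vidx d (min x y) (max x y)" for x y
    by (cases "x \<le> y") (simp_all add: min_def max_def vidx_commute[of d x y])
  assume "vidx d a b = vidx d i j"
  then have "(\<lambda>(i, j). vidx d i j) (min a b, max a b) = (\<lambda>(i, j). vidx d i j) (min i j, max i j)"
    using ordered[of a b] ordered[of i j] by simp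
  then have "(min a b, max a b) = (min i j, max i j)"
    using assms by (intro inj_onD[OF inj_on_vidx]) (auto simp: upper_pairs_def)
  then show "(a = i \<and> b = j) \<or> (a = j \<and> b = i)"
    by (auto simp: min_def max_def split: if_splits)
next
  assume "(a = i \<and> b = j) \<or> (a = j \<and> b = i)"
  then show "vidx d a b = vidx d i j"
    using vidx_commute by blast
qed

lemma sum_upper_pairs:
  "(\<Sum>p\<in>upper_pairs d. g p) = (\<Sum>i<d. \<Sum>j<d. if i \<le> j then g (i, j) else 0)"
proof -
  have "(\<Sum>i<d. \<Sum>j<d. if i \<le> j then g (i, j) else 0)
      = (\<Sum>p\<in>{..<d} \<times> {..<d}. if fst p \<le> snd p then g p else 0)"
    by (simp add: sum.cartesian_product split_beta) (intro sum.cong refl, auto)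
  also have "\<dots> = (\<Sum>p\<in>upper_pairs d. if fst p \<le> snd p then g p else 0)"
    by (rule sum.mono_neutral_right) (auto simp: upper_pairs_def)
  also have "\<dots> = (\<Sum>p\<in>upper_pairs d. g p)"
    by (rule sum.cong) (auto simp: upper_pairs_def)
  finally show ?thesis by simp
qed

lemma sum_symmetric_as_upper:
  fixes h :: "nat \<Rightarrow> nat \<Rightarrow> 'a::comm_ring_1"
  assumes "\<And>i j. h i j = h j i"
  shows "(\<Sum>i<d. \<Sum>j<d. h i j) = (\<Sum>i<d. \<Sum>j<d. if i < j then 2 * h i j else if i = j then h i j else 0)"
proof -
  let ?U = "\<lambda>i j. if i < j then h i j else 0" and ?D = "\<lambda>i j. if i = j then h i j else 0"
  have "(\<Sum>i<d. \<Sum>j<d. if j < i then h i j else 0) = (\<Sum>j<d. \<Sum>i<d. if j < i then h i j else 0)"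
    by (rule sum.swap)
  also have "\<dots> = (\<Sum>i<d. \<Sum>j<d. ?U i j)"
    using assms by (intro sum.cong refl) auto
  finally have lower: "(\<Sum>i<d. \<Sum>j<d. if j < i then h i j else 0) = (\<Sum>i<d. \<Sum>j<d. ?U i j)" .
  have "(\<Sum>i<d. \<Sum>j<d. h i j) = (\<Sum>i<d. \<Sum>j<d. ?U i j + ?D i j + (if j < i then h i j else 0))"
    by (intro sum.cong refl) auto
  also have "\<dots> = (\<Sum>i<d. \<Sum>j<d. ?U i j) + (\<Sum>i<d. \<Sum>j<d. ?D i j) + (\<Sum>i<d. \<Sum>j<d. ?U i j)"
    by (simp only: sum.distrib lower)
  also have "\<dots> = (\<Sum>i<d. \<Sum>j<d. ?U i j + ?D i j + ?U i j)"
    by (simp only: sum.distrib)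
  also have "\<dots> = (\<Sum>i<d. \<Sum>j<d. if i < j then 2 * h i j else if i = j then h i j else 0)"
    by (intro sum.cong refl) simp
  finally show ?thesis .
qed

lemma sum_double_delta:
  fixes C :: "nat \<Rightarrow> nat \<Rightarrow> 'a::comm_monoid_add"
  assumes "i < d" "j < d"
  shows "(\<Sum>a<d. \<Sum>b<d. if a = i \<and> b = j then C a b else 0) = C i j"
proof -
  have "(\<Sum>a<d. \<Sum>b<d. if a = i \<and> b = j then C a b else 0) = (\<Sum>a<d. if a = i then C a j else 0)"
    using assms by (intro sum.cong refl) (auto simp: sum.delta')
  also have "\<dots> = C i j"
    using assms by (simp add: sum.delta')
  finally show ?thesis .
qed

lemma inner_CV_mvar: "inner_CV d C (mvar k) = (\<Sum>a<d. \<Sum>b<d. if vidx d a b = k then C a b else 0)"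
  unfolding inner_CV_def Vmat_def var_def by (intro sum.cong refl) (auto simp: mvar_eq_iff)

lemma inner_CV_mvar_vidx:
  assumes i: "i < d" and j: "j < d"
  shows "inner_CV d C (mvar (vidx d i j)) = (if i = j then C i i else C i j + C j i)"
proof -
  have "inner_CV d C (mvar (vidx d i j))
      = (\<Sum>a<d. \<Sum>b<d. if (a = i \<and> b = j) \<or> (a = j \<and> b = i) then C a b else 0)"
    unfolding inner_CV_mvar using i j by (intro sum.cong refl) (simp add: vidx_eq_iff)
  also have "\<dots> = (if i = j then C i i else C i j + C j i)"
  proof (cases "i = j")
    case True
    then show ?thesis using sum_double_delta[OF i i, of C] by simp
  next
    case False
    have "(\<Sum>a<d. \<Sum>b<d. if (a = i \<and> b = j) \<or> (a = j \<and> b = i) then C a b else 0)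
        = (\<Sum>a<d. \<Sum>b<d. (if a = i \<and> b = j then C a b else 0) + (if a = j \<and> b = i then C a b else 0))"
      using False by (intro sum.cong refl) auto
    also have "\<dots> = C i j + C j i"
      using sum_double_delta[OF i j, of C] sum_double_delta[OF j i, of C] by (simp only: sum.distrib)
    finally show ?thesis using False by simp
  qed
  finally show ?thesis .
qed

lemma inner_CV_mvar_outside: "sigma d \<le> k \<Longrightarrow> inner_CV d C (mvar k) = 0"
  unfolding inner_CV_mvar using vidx_less_sigma[of _ d] by (intro sum.neutral ballI) force

definition V_entry :: "nat \<Rightarrow> nat \<Rightarrow> nat \<Rightarrow> pser" where
  "V_entry d i j = pvar (vidx d i j)"

definition V_quad :: "nat \<Rightarrow> (nat \<Rightarrow> real) \<Rightarrow> pser" where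
  "V_quad d c = (\<Sum>i<d. \<Sum>j<d. of_real (c i) * (V_entry d i j * of_real (c j)))"

lemma V_quad_in_QM: "pcoeff (V_quad d c) \<in> QM n d"
proof -
  have "is_poly n (pcoeff (of_real a))" for a
  proof -
    have "{\<alpha>. pcoeff (of_real a) \<alpha> \<noteq> 0} \<subseteq> {0}" by (auto simp: pcoeff_of_real)
    then show ?thesis by (auto simp: is_poly_def in_vars_def pcoeff_of_real intro: finite_subset)
  qed
  moreover have "sos_poly n (\<lambda>\<alpha>. 0)"
    unfolding sos_poly_def by (intro exI[of _ 0]) simp
  moreover have "pcoeff (V_quad d c) = (\<lambda>\<alpha>. 0 + (\<Sum>t<(1::nat). \<Sum>i<d. \<Sum>j<d.
      fps_mult (pcoeff (of_real (c i))) (fps_mult (Vmat d i j) (pcoeff (of_real (c j)))) \<alpha>))"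
    by (simp add: fun_eq_iff V_quad_def pcoeff_sum pcoeff_mult V_entry_def pvar.rep_eq Vmat_def)
  ultimately show ?thesis
    unfolding QM_def by (intro CollectI exI[of _ "\<lambda>\<alpha>. 0"] exI[of _ 1] exI[of _ "\<lambda>_ i. pcoeff (of_real (c i))"]) simp
qed

lemma in_pvars_V_quad: "sigma d \<le> n \<Longrightarrow> in_pvars n (V_quad d c)"
  unfolding V_quad_def V_entry_def
  by (intro in_pvars_sum in_pvars_mult in_pvars_of_real in_pvars_pvar)
     (auto intro: less_le_trans[OF vidx_less_sigma])

lemma pos_const_coeff_mult_V_quad_in_QM_ser:
  assumes "sigma d \<le> n" and "const_coeff s > 0"
  shows "s * V_quad d c \<in> QM_ser n d"
proof -
  have "V_quad d c \<in> {q. in_pvars n q \<and> pcoeff q \<in> QM n d}"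
    using in_pvars_V_quad[OF assms(1)] V_quad_in_QM by blast
  then show ?thesis
    unfolding QM_ser_def using assms(2)
    by (intro sum_of_squares_mult_in_qmodule pos_const_coeff_sum_of_squares)
qed

lemma V_quad_eq: "V_quad d c = (\<Sum>i<d. \<Sum>j<d. of_real (c i * c j) * V_entry d i j)"
  unfolding V_quad_def by (intro sum.cong refl) (simp add: ac_simps)

lemma V_quad_two_entries:
  assumes "i < d" "j < d"
  shows "V_quad d (\<lambda>a. of_bool (a = i) + s * of_bool (a = j))
       = V_entry d i i + of_real s * V_entry d i j + of_real s * V_entry d j i + of_real (s * s) * V_entry d j j"
proof -
  let ?V = "V_entry d"
  have "V_quad d (\<lambda>a. of_bool (a = i) + s * of_bool (a = j))
      = (\<Sum>a<d. \<Sum>b<d. (if a = i \<and> b = i then ?V a b else 0) + (if a = i \<and> b = j then of_real s * ?V a b else 0)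
          + (if a = j \<and> b = i then of_real s * ?V a b else 0) + (if a = j \<and> b = j then of_real (s * s) * ?V a b else 0))"
    unfolding V_quad_eq by (intro sum.cong refl) (auto simp: algebra_simps)
  also have "\<dots> = ?V i i + of_real s * ?V i j + of_real s * ?V j i + of_real (s * s) * ?V j j"
    using sum_double_delta[OF assms(1) assms(1), of ?V] sum_double_delta[OF assms, of "\<lambda>a b. of_real s * ?V a b"]
      sum_double_delta[OF assms(2) assms(1), of "\<lambda>a b. of_real s * ?V a b"]
      sum_double_delta[OF assms(2) assms(2), of "\<lambda>a b. of_real (s * s) * ?V a b"]
    by (simp only: sum.distrib)
  finally show ?thesis .
qed

section \<open>Splitting off the least variable\<close>

text \<open>\<open>pvar k * least_var_quot a k\<close> collects the monomials of \<open>a\<close> whose least variable is \<open>v\<^sub>k\<close>.\<close>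

lift_definition least_var_quot :: "pser \<Rightarrow> nat \<Rightarrow> pser" is
  "\<lambda>f k \<beta>. if \<forall>i\<in>Poly_Mapping.keys \<beta>. k \<le> i then f (\<beta> + mvar k) else 0" .

lemma const_coeff_least_var_quot: "const_coeff (least_var_quot a k) = pcoeff a (mvar k)"
  by (simp add: const_coeff_def least_var_quot.rep_eq)

lemma least_key_iff:
  assumes "\<alpha> \<noteq> 0"
  shows "(Poly_Mapping.lookup \<alpha> k > 0 \<and> (\<forall>i\<in>Poly_Mapping.keys (\<alpha> - mvar k). k \<le> i))
         \<longleftrightarrow> k = Min (Poly_Mapping.keys \<alpha>)"
proof
  assume k: "Poly_Mapping.lookup \<alpha> k > 0 \<and> (\<forall>i\<in>Poly_Mapping.keys (\<alpha> - mvar k). k \<le> i)"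
  then have "k \<in> Poly_Mapping.keys \<alpha>" by (simp add: in_keys_iff)
  moreover have "k \<le> j" if "j \<in> Poly_Mapping.keys \<alpha>" for j
    using k that by (cases "j = k") (auto simp: in_keys_iff lookup_minus_mvar)
  ultimately show "k = Min (Poly_Mapping.keys \<alpha>)"
    by (intro antisym[symmetric] Min_le) (auto intro!: Min.boundedI)
next
  assume k: "k = Min (Poly_Mapping.keys \<alpha>)"
  then have "k \<in> Poly_Mapping.keys \<alpha>" using assms by simp
  moreover have "k \<le> i" if "i \<in> Poly_Mapping.keys (\<alpha> - mvar k)" for i
    using that k by (auto simp: in_keys_iff lookup_minus_mvar split: if_splits)
  ultimately show "Poly_Mapping.lookup \<alpha> k > 0 \<and> (\<forall>i\<in>Poly_Mapping.keys (\<alpha> - mvar k). k \<le> i)"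
    by (simp add: in_keys_iff)
qed

lemma pser_eq_sum_least_var_quot:
  assumes "in_pvars N a" and "const_coeff a = 0"
  shows "a = (\<Sum>k<N. pvar k * least_var_quot a k)"
proof (rule pcoeff_inject[THEN iffD1], rule ext)
  fix \<alpha>
  let ?least = "\<lambda>k. Poly_Mapping.lookup \<alpha> k > 0 \<and> (\<forall>i\<in>Poly_Mapping.keys (\<alpha> - mvar k). k \<le> i)"
  have "pcoeff (\<Sum>k<N. pvar k * least_var_quot a k) \<alpha> = (\<Sum>k<N. if ?least k then pcoeff a \<alpha> else 0)"
    by (simp add: pcoeff_sum pcoeff_pvar_mult least_var_quot.rep_eq minus_mvar_add cong: if_cong)
       (intro sum.cong refl, auto simp: minus_mvar_add)
  also have "\<dots> = pcoeff a \<alpha>"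
  proof (cases "\<alpha> = 0")
    case True
    then show ?thesis using assms(2) by (simp add: const_coeff_def)
  next
    case False
    let ?m = "Min (Poly_Mapping.keys \<alpha>)"
    have "(\<Sum>k<N. if ?least k then pcoeff a \<alpha> else 0) = (\<Sum>k<N. if k = ?m then pcoeff a \<alpha> else 0)"
      using least_key_iff[OF False] by (intro sum.cong refl) presburger
    also have "\<dots> = (if ?m < N then pcoeff a \<alpha> else 0)"
      by (simp add: sum.delta')
    also have "\<dots> = pcoeff a \<alpha>"
    proof (cases "pcoeff a \<alpha> = 0")
      case False
      then have "Poly_Mapping.keys \<alpha> \<subseteq> {..<N}" using assms(1) by (auto simp: in_vars_def)
      moreover have "?m \<in> Poly_Mapping.keys \<alpha>" using \<open>\<alpha> \<noteq> 0\<close> by simp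
      ultimately show ?thesis by auto
    qed simp
    finally show ?thesis .
  qed
  finally show "pcoeff a \<alpha> = pcoeff (\<Sum>k<N. pvar k * least_var_quot a k) \<alpha>" by simp
qed

lemma pser_split_least_var:
  assumes "in_pvars n a" and "const_coeff a = 0" and "\<sigma> \<le> n"
  shows "a = (\<Sum>k<\<sigma>. pvar k * least_var_quot a k)
           + (\<Sum>k<n - \<sigma>. pvar (k + \<sigma>) * least_var_quot a (k + \<sigma>))"
proof -
  have "a = (\<Sum>k<\<sigma> + (n - \<sigma>). pvar k * least_var_quot a k)"
    using pser_eq_sum_least_var_quot[OF assms(1,2)] assms(3) by simp
  then show ?thesis by (simp only: sum_lessThan_add)
qed

lemma in_pvars_least_var_quot:
  assumes "in_pvars N a"
  shows "in_pvars N (least_var_quot a k)"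
  unfolding in_vars_def
proof (intro allI impI)
  fix \<beta> assume "pcoeff (least_var_quot a k) \<beta> \<noteq> 0"
  then have "pcoeff a (\<beta> + mvar k) \<noteq> 0" by (simp add: least_var_quot.rep_eq split: if_splits)
  then have "Poly_Mapping.keys (\<beta> + mvar k) \<subseteq> {..<N}" using assms by (auto simp: in_vars_def)
  then show "Poly_Mapping.keys \<beta> \<subseteq> {..<N}" by (simp add: keys_add_mon)
qed

lemma least_var_quot_least_var_quot_less:
  assumes "l < k"
  shows "least_var_quot (least_var_quot a k) l = 0"
proof (rule pcoeff_inject[THEN iffD1], rule ext)
  fix \<beta>
  have "l \<in> Poly_Mapping.keys (\<beta> + mvar l)"
    by (simp add: keys_add_mon)
  then show "pcoeff (least_var_quot (least_var_quot a k) l) \<beta> = pcoeff 0 \<beta>"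
    using assms by (auto simp: least_var_quot.rep_eq)
qed

lemma const_coeff_least_var_quot_least_var_quot:
  "const_coeff (least_var_quot (least_var_quot a k) l) = (if k \<le> l then pcoeff a (mvar l + mvar k) else 0)"
  by (simp add: const_coeff_least_var_quot least_var_quot.rep_eq)

lemma keys_mvar_add_mvar: "Poly_Mapping.keys (mvar u + mvar v) = {u, v}"
  by (auto simp: keys_add_mon)

lemma mvar_add_mvar_eq_iff:
  "u \<le> v \<Longrightarrow> u' \<le> v' \<Longrightarrow> mvar u + mvar v = mvar u' + mvar v' \<longleftrightarrow> u = u' \<and> v = v'"
  by (metis keys_mvar_add_mvar doubleton_eq_iff le_antisym)

lemma mdeg_1_imp_mvar: "mdeg \<alpha> = 1 \<Longrightarrow> \<exists>l. \<alpha> = mvar l"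
proof -
  assume deg: "mdeg \<alpha> = 1"
  then have "\<alpha> \<noteq> 0" by (auto simp: mdeg_def)
  then obtain l where l: "l \<in> Poly_Mapping.keys \<alpha>" by fastforce
  then have split: "mvar l + (\<alpha> - mvar l) = \<alpha>"
    using minus_mvar_add[of \<alpha> l] by (simp add: in_keys_iff add.commute)
  then have "mdeg (\<alpha> - mvar l) = 0"
    using deg mdeg_add[of "mvar l" "\<alpha> - mvar l"] by simp
  then have "\<alpha> - mvar l = 0"
    by (simp add: mdeg_eq_0_iff)
  then show ?thesis
    using split by (metis add.right_neutral)
qed

lemma mdeg_2_imp_mvar_add_mvar: "mdeg \<alpha> = 2 \<Longrightarrow> \<exists>k l. k \<le> l \<and> \<alpha> = mvar k + mvar l"
proof -
  assume deg: "mdeg \<alpha> = 2"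
  then have "\<alpha> \<noteq> 0" by (auto simp: mdeg_def)
  define k where "k = Min (Poly_Mapping.keys \<alpha>)"
  have "k \<in> Poly_Mapping.keys \<alpha>" using \<open>\<alpha> \<noteq> 0\<close> by (simp add: k_def)
  then have split: "mvar k + (\<alpha> - mvar k) = \<alpha>"
    using minus_mvar_add[of \<alpha> k] by (simp add: in_keys_iff add.commute)
  then have "mdeg (\<alpha> - mvar k) = 1"
    using deg mdeg_add[of "mvar k" "\<alpha> - mvar k"] by simp
  then obtain l where l: "\<alpha> - mvar k = mvar l" using mdeg_1_imp_mvar by blast
  then have \<alpha>_eq: "\<alpha> = mvar k + mvar l" using split by simp
  have "l \<in> Poly_Mapping.keys \<alpha>"
    unfolding \<alpha>_eq keys_mvar_add_mvar by simp
  then have "k \<le> l" by (simp add: k_def)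
  then show ?thesis using \<alpha>_eq by blast
qed

definition mon_eval :: "(nat \<Rightarrow> real) \<Rightarrow> mon \<Rightarrow> real" where
  "mon_eval x \<alpha> = (\<Prod>i\<in>Poly_Mapping.keys \<alpha>. x i ^ Poly_Mapping.lookup \<alpha> i)"

lemma mon_eval_mvar_add_mvar: "mon_eval x (mvar u + mvar v) = x u * x v"
proof (cases "u = v")
  case True
  have "mvar v + mvar v = Poly_Mapping.single v 2"
    by (simp add: single_add[symmetric] numeral_2_eq_2)
  then show ?thesis using True by (simp add: mon_eval_def power2_eq_square)
next
  case False
  then show ?thesis by (simp add: mon_eval_def keys_mvar_add_mvar lookup_add lookup_single)
qed

lemma hom_part_2_nonzero_imp:
  assumes "in_vars n f" and "hom_part 2 f \<alpha> \<noteq> 0"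
  shows "\<exists>k l. k \<le> l \<and> l < n \<and> \<alpha> = mvar k + mvar l"
proof -
  have deg: "mdeg \<alpha> = 2" and "f \<alpha> \<noteq> 0"
    using assms(2) by (auto simp: hom_part_def split: if_splits)
  then have "Poly_Mapping.keys \<alpha> \<subseteq> {..<n}" using assms(1) by (simp add: in_vars_def)
  then show ?thesis
    using mdeg_2_imp_mvar_add_mvar[OF deg] keys_mvar_add_mvar by blast
qed

lemma peval_hom_part_2_shift:
  assumes f: "in_vars n f" and "\<sigma> \<le> n"
  shows "peval (hom_part 2 f) (\<lambda>k. if \<sigma> \<le> k \<and> k < n then x (k - \<sigma>) else 0)
       = (\<Sum>a<n - \<sigma>. \<Sum>b<n - \<sigma>. if a \<le> b then f (mvar (\<sigma> + a) + mvar (\<sigma> + b)) * x a * x b else 0)"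
proof -
  define M where "M = n - \<sigma>"
  define y where "y = (\<lambda>k. if \<sigma> \<le> k \<and> k < n then x (k - \<sigma>) else 0)"
  define p where "p = hom_part 2 f"
  define S where "S = {\<alpha>. p \<alpha> \<noteq> 0}"
  define \<phi> where "\<phi> = (\<lambda>(a, b). mvar (\<sigma> + a) + mvar (\<sigma> + b))"
  have "S \<subseteq> (\<lambda>(k, l). mvar k + mvar l) ` upper_pairs n"
    using hom_part_2_nonzero_imp[OF f] by (force simp: S_def p_def upper_pairs_def)
  then have fin: "finite (S \<union> \<phi> ` upper_pairs M)"
    using finite_upper_pairs finite_subset by blast
  have inj\<phi>: "inj_on \<phi> (upper_pairs M)"
    by (rule inj_onI) (auto simp: \<phi>_def upper_pairs_def mvar_add_mvar_eq_iff)
  \<comment> \<open>monomials of \<open>f\<^sub>2\<close> involving a variable below \<open>\<sigma>\<close> vanish at \<open>y\<close>\<close>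
  have outside: "p \<alpha> * mon_eval y \<alpha> = 0" if \<alpha>: "\<alpha> \<in> S" "\<alpha> \<notin> \<phi> ` upper_pairs M" for \<alpha>
  proof -
    have "hom_part 2 f \<alpha> \<noteq> 0" using \<alpha>(1) by (simp add: S_def p_def)
    then obtain k l where kl: "k \<le> l" "l < n" "\<alpha> = mvar k + mvar l"
      using hom_part_2_nonzero_imp[OF f] by blast
    have "k < \<sigma>"
    proof (rule ccontr)
      assume "\<not> k < \<sigma>"
      then have "(k - \<sigma>, l - \<sigma>) \<in> upper_pairs M" "\<alpha> = \<phi> (k - \<sigma>, l - \<sigma>)"
        using kl by (auto simp: upper_pairs_def M_def \<phi>_def)
      then show False using \<alpha>(2) by blast
    qed
    then show ?thesis using kl by (simp add: mon_eval_mvar_add_mvar y_def)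
  qed
  have "peval p y = (\<Sum>\<alpha>\<in>S. p \<alpha> * mon_eval y \<alpha>)" by (simp add: peval_def S_def mon_eval_def)
  also have "\<dots> = (\<Sum>\<alpha>\<in>\<phi> ` upper_pairs M. p \<alpha> * mon_eval y \<alpha>)"
    using fin outside by (intro sum.mono_neutral_cong) (auto simp: S_def)
  also have "\<dots> = (\<Sum>q\<in>upper_pairs M. f (mvar (\<sigma> + fst q) + mvar (\<sigma> + snd q)) * x (fst q) * x (snd q))"
    unfolding sum.reindex[OF inj\<phi>]
    by (intro sum.cong refl)
       (auto simp: \<phi>_def mon_eval_mvar_add_mvar y_def M_def p_def hom_part_def mdeg_add upper_pairs_def)
  also have "\<dots> = (\<Sum>a<M. \<Sum>b<M. if a \<le> b then f (mvar (\<sigma> + a) + mvar (\<sigma> + b)) * x a * x b else 0)"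
    unfolding sum_upper_pairs by (simp only: fst_conv snd_conv)
  finally show ?thesis by (simp add: p_def y_def M_def)
qed

text \<open>The symmetric matrix of \<open>f\<^sub>2(0, \<dots>, 0, v\<^sub>\<sigma>\<^sub>+\<^sub>1, \<dots>, v\<^sub>n)\<close>, indexed from \<open>0\<close>.\<close>

definition quad_coeffs :: "fps \<Rightarrow> nat \<Rightarrow> nat \<Rightarrow> nat \<Rightarrow> real" where
  "quad_coeffs f \<sigma> a b = (if a = b then 1 else 1 / 2) * f (mvar (\<sigma> + a) + mvar (\<sigma> + b))"

lemma quad_coeffs_commute: "quad_coeffs f \<sigma> a b = quad_coeffs f \<sigma> b a"
  by (simp add: quad_coeffs_def add.commute)

lemma quad_form_quad_coeffs:
  "quad_form M (quad_coeffs f \<sigma>) x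
     = (\<Sum>a<M. \<Sum>b<M. if a \<le> b then f (mvar (\<sigma> + a) + mvar (\<sigma> + b)) * x a * x b else 0)"
proof -
  have "quad_form M (quad_coeffs f \<sigma>) x
      = (\<Sum>a<M. \<Sum>b<M. if a < b then 2 * (x a * quad_coeffs f \<sigma> a b * x b)
                       else if a = b then x a * quad_coeffs f \<sigma> a b * x b else 0)"
    unfolding quad_form_def
    by (rule sum_symmetric_as_upper) (simp add: quad_coeffs_commute ac_simps)
  also have "\<dots> = (\<Sum>a<M. \<Sum>b<M. if a \<le> b then f (mvar (\<sigma> + a) + mvar (\<sigma> + b)) * x a * x b else 0)"
    by (intro sum.cong refl) (auto simp: quad_coeffs_def)
  finally show ?thesis .
qed

lemma pos_def_quad_coeffs:
  assumes f: "in_vars n f" and "\<sigma> \<le> n"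
    and pos: "\<forall>x::nat \<Rightarrow> real. (\<forall>k<\<sigma>. x k = 0) \<longrightarrow> (\<exists>k\<in>{\<sigma>..<n}. x k \<noteq> 0)
                \<longrightarrow> peval (hom_part 2 f) x > 0"
  shows "pos_def (n - \<sigma>) (quad_coeffs f \<sigma>)"
  unfolding pos_def_iff_quad_form
proof (intro conjI allI impI)
  show "quad_coeffs f \<sigma> a b = quad_coeffs f \<sigma> b a" for a b
    by (rule quad_coeffs_commute)
  fix x :: "nat \<Rightarrow> real" assume "\<exists>i<n - \<sigma>. x i \<noteq> 0"
  then obtain i where i: "i < n - \<sigma>" "x i \<noteq> 0" by blast
  let ?y = "\<lambda>k. if \<sigma> \<le> k \<and> k < n then x (k - \<sigma>) else 0"
  have "\<exists>k\<in>{\<sigma>..<n}. ?y k \<noteq> 0"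
    using i by (intro bexI[of _ "\<sigma> + i"]) auto
  then have "peval (hom_part 2 f) ?y > 0"
    using pos by auto
  then show "quad_form (n - \<sigma>) (quad_coeffs f \<sigma>) x > 0"
    unfolding quad_form_quad_coeffs peval_hom_part_2_shift[OF f \<open>\<sigma> \<le> n\<close>] .
qed

lemma two_mult_of_real_half: "2 * of_real (1 / 2) = (1 :: 'a::real_algebra_1)"
  using of_real_mult[of 2 "1 / 2", where 'a='a] by simp

lemma four_mult_of_real_quarter: "4 * of_real (1 / 4) = (1 :: 'a::real_algebra_1)"
  using of_real_mult[of 4 "1 / 4", where 'a='a] by simp

lemma sum_pvar_eq_V_pairing:
  "(\<Sum>k<sigma d. pvar k * g k)
     = (\<Sum>i<d. \<Sum>j<d. of_real (if i = j then 1 else 1 / 2) * g (vidx d i j) * V_entry d i j)"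
proof -
  have "(\<Sum>i<d. \<Sum>j<d. of_real (if i = j then 1 else 1 / 2) * g (vidx d i j) * V_entry d i j)
      = (\<Sum>i<d. \<Sum>j<d. if i < j then 2 * (of_real (if i = j then 1 else 1 / 2) * g (vidx d i j) * V_entry d i j)
                       else if i = j then of_real (if i = j then 1 else 1 / 2) * g (vidx d i j) * V_entry d i j
                       else 0)"
    by (rule sum_symmetric_as_upper) (simp add: V_entry_def vidx_commute eq_commute)
  also have "\<dots> = (\<Sum>i<d. \<Sum>j<d. if i \<le> j then pvar (vidx d i j) * g (vidx d i j) else 0)"
  proof (intro sum.cong refl)
    fix i j
    show "(if i < j then 2 * (of_real (if i = j then 1 else 1 / 2) * g (vidx d i j) * V_entry d i j)
           else if i = j then of_real (if i = j then 1 else 1 / 2) * g (vidx d i j) * V_entry d i j else 0)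
        = (if i \<le> j then pvar (vidx d i j) * g (vidx d i j) else 0)"
    proof (cases i j rule: linorder_cases)
      case less
      have "2 * (of_real (1 / 2) * g (vidx d i j) * V_entry d i j)
          = (2 * of_real (1 / 2)) * (V_entry d i j * g (vidx d i j))"
        by (simp only: ac_simps)
      then show ?thesis
        using less by (simp add: two_mult_of_real_half V_entry_def)
    qed (simp_all add: V_entry_def mult.commute)
  qed
  also have "\<dots> = (\<Sum>p\<in>upper_pairs d. (\<lambda>k. pvar k * g k) ((\<lambda>(i, j). vidx d i j) p))"
    by (subst sum_upper_pairs) (simp only: prod.case)
  also have "\<dots> = (\<Sum>k<sigma d. pvar k * g k)"
    by (rule sum.reindex_bij_betw[OF bij_betw_vidx])
  finally show ?thesis ..
qed

lemma sum_V_quad_factorization: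
  assumes "\<forall>i<d. \<forall>j<d. C i j = (\<Sum>t<d. c t i * c t j)"
  shows "(\<Sum>t<d. V_quad d (c t)) = (\<Sum>i<d. \<Sum>j<d. of_real (C i j) * V_entry d i j)"
proof -
  have "(\<Sum>t<d. V_quad d (c t)) = (\<Sum>t<d. \<Sum>i<d. \<Sum>j<d. of_real (c t i * c t j) * V_entry d i j)"
    by (simp add: V_quad_eq)
  also have "\<dots> = (\<Sum>i<d. \<Sum>j<d. \<Sum>t<d. of_real (c t i * c t j) * V_entry d i j)"
    by (subst sum.swap) (intro sum.cong refl sum.swap)
  also have "\<dots> = (\<Sum>i<d. \<Sum>j<d. of_real (C i j) * V_entry d i j)"
    using assms by (intro sum.cong refl) (simp add: of_real_sum sum_distrib_right)
  finally show ?thesis .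
qed

lemma V_pairing_perturbation:
  fixes w :: pser and E :: "nat \<Rightarrow> nat \<Rightarrow> pser"
  shows "(\<Sum>i<d. \<Sum>j<d. (w + of_real (1 / 4) * E i j) * V_quad d (\<lambda>a. of_bool (a = i) + of_bool (a = j))
                     + (w - of_real (1 / 4) * E i j) * V_quad d (\<lambda>a. of_bool (a = i) - of_bool (a = j)))
       = 4 * of_nat d * w * (\<Sum>i<d. V_entry d i i) + (\<Sum>i<d. \<Sum>j<d. E i j * V_entry d i j)"
proof -
  let ?V = "V_entry d"
  have "(w + of_real (1 / 4) * E i j) * V_quad d (\<lambda>a. of_bool (a = i) + of_bool (a = j))
        + (w - of_real (1 / 4) * E i j) * V_quad d (\<lambda>a. of_bool (a = i) - of_bool (a = j))
      = 2 * w * ?V i i + 2 * w * ?V j j + E i j * ?V i j"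
    if "i < d" "j < d" for i j
  proof -
    have "?V j i = ?V i j" by (simp add: V_entry_def vidx_commute)
    then have plus: "V_quad d (\<lambda>a. of_bool (a = i) + of_bool (a = j)) = ?V i i + 2 * ?V i j + ?V j j"
      and minus: "V_quad d (\<lambda>a. of_bool (a = i) - of_bool (a = j)) = ?V i i - 2 * ?V i j + ?V j j"
      using V_quad_two_entries[OF that, of 1] V_quad_two_entries[OF that, of "-1"]
      by (simp_all add: algebra_simps)
    have "(w + q * e) * (a + 2 * b + c) + (w - q * e) * (a - 2 * b + c) = 2 * w * a + 2 * w * c + (4 * q) * e * b"
      for q e a b c :: pser
      by (simp add: algebra_simps)
    from this[of "of_real (1 / 4)"] show ?thesis
      unfolding plus minus four_mult_of_real_quarter by simp
  qed
  then have "(\<Sum>i<d. \<Sum>j<d. (w + of_real (1 / 4) * E i j) * V_quad d (\<lambda>a. of_bool (a = i) + of_bool (a = j))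
                     + (w - of_real (1 / 4) * E i j) * V_quad d (\<lambda>a. of_bool (a = i) - of_bool (a = j)))
      = (\<Sum>i<d. \<Sum>j<d. 2 * w * ?V i i) + (\<Sum>i<d. \<Sum>j<d. 2 * w * ?V j j) + (\<Sum>i<d. \<Sum>j<d. E i j * ?V i j)"
    by (simp add: sum.distrib)
  also have "\<dots> = 4 * of_nat d * w * (\<Sum>i<d. ?V i i) + (\<Sum>i<d. \<Sum>j<d. E i j * ?V i j)"
    by (simp add: sum_distrib_left algebra_simps)
  finally show ?thesis .
qed

lemma pos_def_minus_diag_factorization:
  assumes "pos_def d C"
  shows "\<exists>\<epsilon>>0. \<exists>c. \<forall>i<d. \<forall>j<d. C i j - (if i = j then 4 * real d * \<epsilon> else 0) = (\<Sum>t<d. c t i * c t j)"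
proof -
  obtain \<delta> where \<delta>: "\<delta> > 0" "\<forall>\<mu><\<delta>. pos_def d (\<lambda>i j. C i j - (if i = j then \<mu> else 0))"
    using pos_def_minus_diag[OF assms] by blast
  define \<epsilon> where "\<epsilon> = \<delta> / (8 * (real d + 1))"
  have "4 * real d * \<epsilon> = \<delta> * (real d / (2 * (real d + 1)))" by (simp add: \<epsilon>_def field_simps)
  also have "\<dots> < \<delta> * 1" using \<delta>(1) by (intro mult_strict_left_mono) (auto simp: field_simps)
  finally have "pos_def d (\<lambda>i j. C i j - (if i = j then 4 * real d * \<epsilon> else 0))"
    using \<delta>(2) by simp
  then obtain c where "\<forall>i<d. \<forall>j<d. C i j - (if i = j then 4 * real d * \<epsilon> else 0) = (\<Sum>t<d. c t i * c t j)"
    using real_id.cholesky[of d "\<lambda>i j. C i j - (if i = j then 4 * real d * \<epsilon> else 0)"]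
    unfolding pos_def_def by blast
  moreover have "\<epsilon> > 0" using \<delta>(1) by (simp add: \<epsilon>_def)
  ultimately show ?thesis by blast
qed

text \<open>Write \<open>H = C + E\<close> with \<open>E(0) = 0\<close>. The part \<open>C - 4d\<epsilon>I\<close> is a sum of forms \<open>c\<^sub>t\<^sup>T V c\<^sub>t\<close>,
  and \<open>4d\<epsilon>\<close> times the trace of \<open>V\<close> absorbs \<open>E\<close> by the perturbation identity, whose weights
  \<open>\<epsilon> \<plusminus> E\<^sub>i\<^sub>j/4\<close> have positive constant term.\<close>

lemma V_pairing_in_QM_ser:
  assumes C: "pos_def d C" and n: "sigma d \<le> n"
    and H: "\<And>i j. i < d \<Longrightarrow> j < d \<Longrightarrow> const_coeff (H i j) = C i j"
  shows "(\<Sum>i<d. \<Sum>j<d. H i j * V_entry d i j) \<in> QM_ser n d"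
proof -
  let ?V = "V_entry d"
  obtain \<epsilon> c where \<epsilon>: "\<epsilon> > 0"
    and c: "\<forall>i<d. \<forall>j<d. C i j - (if i = j then 4 * real d * \<epsilon> else 0) = (\<Sum>t<d. c t i * c t j)"
    using pos_def_minus_diag_factorization[OF C] by blast
  define E where "E i j = H i j - of_real (C i j)" for i j
  define w :: pser where "w = of_real \<epsilon>"
  have "(\<Sum>i<d. \<Sum>j<d. H i j * ?V i j)
      = (\<Sum>i<d. \<Sum>j<d. of_real (C i j - (if i = j then 4 * real d * \<epsilon> else 0)) * ?V i j
                     + (if i = j then 4 * of_nat d * w * ?V i j else 0) + E i j * ?V i j)"
    by (intro sum.cong refl) (simp add: E_def w_def algebra_simps)
  also have "\<dots> = (\<Sum>t<d. V_quad d (c t)) + (4 * of_nat d * w * (\<Sum>i<d. ?V i i) + (\<Sum>i<d. \<Sum>j<d. E i j * ?V i j))"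
    by (simp add: sum.distrib sum_V_quad_factorization[OF c] sum_distrib_left)
  also have "\<dots> = (\<Sum>t<d. 1 * V_quad d (c t))
      + (\<Sum>i<d. \<Sum>j<d. (w + of_real (1 / 4) * E i j) * V_quad d (\<lambda>a. of_bool (a = i) + of_bool (a = j))
                     + (w - of_real (1 / 4) * E i j) * V_quad d (\<lambda>a. of_bool (a = i) - of_bool (a = j)))"
    by (simp add: V_pairing_perturbation)
  also have "\<dots> \<in> QM_ser n d"
  proof (intro QM_ser_add QM_ser_sum)
    show "1 * V_quad d (c t) \<in> QM_ser n d" for t
      using n by (intro pos_const_coeff_mult_V_quad_in_QM_ser) simp_all
    fix i j assume "i \<in> {..<d}" "j \<in> {..<d}"
    then have "const_coeff (E i j) = 0" by (simp add: E_def H)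
    then show "(w + of_real (1 / 4) * E i j) * V_quad d (\<lambda>a. of_bool (a = i) + of_bool (a = j)) \<in> QM_ser n d"
      and "(w - of_real (1 / 4) * E i j) * V_quad d (\<lambda>a. of_bool (a = i) - of_bool (a = j)) \<in> QM_ser n d"
      using n \<epsilon> by (simp_all add: pos_const_coeff_mult_V_quad_in_QM_ser w_def)
  qed
  finally show ?thesis .
qed

lemma hom_part_1_mvar: "hom_part 1 f (mvar k) = f (mvar k)"
  by (simp add: hom_part_def)

lemma matrix_vars_part_in_QM_ser:
  assumes C: "pos_def d C" and n: "sigma d \<le> n"
    and lin: "hom_part 1 (pcoeff A) = inner_CV d C"
  shows "(\<Sum>k<sigma d. pvar k * least_var_quot A k) \<in> QM_ser n d"
proof -
  have coeff: "pcoeff A (mvar k) = inner_CV d C (mvar k)" for k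
    using fun_cong[OF lin, of "mvar k"] by (simp only: hom_part_1_mvar)
  have "const_coeff (of_real (if i = j then 1 else 1 / 2) * least_var_quot A (vidx d i j)) = C i j"
    if "i < d" "j < d" for i j
    using that C by (auto simp: const_coeff_least_var_quot coeff inner_CV_mvar_vidx pos_def_def)
  then show ?thesis
    unfolding sum_pvar_eq_V_pairing by (rule V_pairing_in_QM_ser[OF C n])
qed

lemma sum_quad_symmetrize:
  fixes Y :: "nat \<Rightarrow> 'a::{comm_ring_1, real_algebra_1}"
  shows "(\<Sum>a<M. \<Sum>b<M. Y a * Y b * G a b) = (\<Sum>a<M. \<Sum>b<M. Y a * Y b * (of_real (1 / 2) * (G a b + G b a)))"
proof -
  have "(\<Sum>a<M. \<Sum>b<M. Y a * Y b * G b a) = (\<Sum>b<M. \<Sum>a<M. Y a * Y b * G b a)"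
    by (rule sum.swap)
  also have "\<dots> = (\<Sum>a<M. \<Sum>b<M. Y a * Y b * G a b)"
    by (simp add: ac_simps)
  finally have swap: "(\<Sum>a<M. \<Sum>b<M. Y a * Y b * G b a) = (\<Sum>a<M. \<Sum>b<M. Y a * Y b * G a b)" .
  let ?S = "\<Sum>a<M. \<Sum>b<M. Y a * Y b * G a b"
  have "(\<Sum>a<M. \<Sum>b<M. Y a * Y b * (of_real (1 / 2) * (G a b + G b a)))
      = of_real (1 / 2) * (?S + (\<Sum>a<M. \<Sum>b<M. Y a * Y b * G b a))"
    by (simp add: sum_distrib_left sum.distrib algebra_simps)
  also have "\<dots> = (2 * of_real (1 / 2)) * ?S"
    unfolding swap by (simp add: algebra_simps)
  also have "\<dots> = ?S"
    by (simp add: two_mult_of_real_half)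
  finally show ?thesis ..
qed

lemma other_vars_part_in_QM_ser:
  assumes A: "in_pvars n A" and "\<sigma> \<le> n"
    and lin: "\<And>k. \<sigma> \<le> k \<Longrightarrow> pcoeff A (mvar k) = 0"
    and pd: "pos_def (n - \<sigma>) (quad_coeffs (pcoeff A) \<sigma>)"
  shows "(\<Sum>k<n - \<sigma>. pvar (k + \<sigma>) * least_var_quot A (k + \<sigma>)) \<in> QM_ser n d"
proof -
  define M where "M = n - \<sigma>"
  define Y where "Y k = pvar (k + \<sigma>)" for k
  define G where "G k l = least_var_quot (least_var_quot A (k + \<sigma>)) (l + \<sigma>)" for k l
  have quot: "least_var_quot A (k + \<sigma>) = (\<Sum>l<M. Y l * G k l)" for k
  proof -
    have "least_var_quot A (k + \<sigma>) = (\<Sum>l<\<sigma> + M. pvar l * least_var_quot (least_var_quot A (k + \<sigma>)) l)"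
      using A lin[of "k + \<sigma>"] \<open>\<sigma> \<le> n\<close>
      by (intro pser_eq_sum_least_var_quot) (simp_all add: M_def in_pvars_least_var_quot const_coeff_least_var_quot)
    also have "\<dots> = (\<Sum>l<M. Y l * G k l)"
      by (simp add: sum_lessThan_add least_var_quot_least_var_quot_less Y_def G_def)
    finally show ?thesis .
  qed
  define Q where "Q k l = of_real (1 / 2) * (G k l + G l k)" for k l
  have "(\<Sum>k<M. pvar (k + \<sigma>) * least_var_quot A (k + \<sigma>)) = (\<Sum>k<M. \<Sum>l<M. Y k * Y l * G k l)"
    by (simp add: quot sum_distrib_left Y_def ac_simps)
  also have "\<dots> = (\<Sum>k<M. \<Sum>l<M. Y k * Y l * Q k l)"
    unfolding Q_def by (rule sum_quad_symmetrize)
  finally have eq: "(\<Sum>k<M. pvar (k + \<sigma>) * least_var_quot A (k + \<sigma>)) = (\<Sum>k<M. \<Sum>l<M. Y k * Y l * Q k l)" .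
  have "const_coeff (Q k l) = quad_coeffs (pcoeff A) \<sigma> k l" for k l
    by (auto simp: Q_def G_def const_coeff_least_var_quot_least_var_quot quad_coeffs_def ac_simps)
  then have "sum_of_squares (\<Sum>k<M. \<Sum>l<M. Y k * Y l * Q k l)"
    using pd by (intro const_coeff.quad_form_sum_of_squares) (simp_all add: Q_def add.commute M_def)
  then show ?thesis
    unfolding M_def[symmetric] eq by (rule sum_of_squares_in_QM_ser)
qed

theorem lemma4p3:
  fixes m r n :: nat and C :: "nat \<Rightarrow> nat \<Rightarrow> real" and f :: fps
  assumes "0 < m" and "r \<le> n" and "sigma (m - r) \<le> n"
    and "in_vars n f"
    and "pos_def (m - r) C"
    and "f 0 = 0"
    and "hom_part 1 f = inner_CV (m - r) C"
    and "\<forall>x::nat \<Rightarrow> real. (\<forall>k<sigma (m - r). x k = 0) \<longrightarrow> (\<exists>k\<in>{sigma (m - r)..<n}. x k \<noteq> 0)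
            \<longrightarrow> peval (hom_part 2 f) x > 0"
  shows "f \<in> QM_hat n (m - r)"
proof -
  define d where "d = m - r"
  define \<sigma> where "\<sigma> = sigma d"
  define A where "A = Abs_pser f"
  have f: "pcoeff A = f" by (simp add: A_def Abs_pser_inverse)
  have \<sigma>: "\<sigma> \<le> n" and A: "in_pvars n A" using assms(3,4) by (simp_all add: \<sigma>_def d_def f)
  have "A = (\<Sum>k<\<sigma>. pvar k * least_var_quot A k)
          + (\<Sum>k<n - \<sigma>. pvar (k + \<sigma>) * least_var_quot A (k + \<sigma>))"
    using A \<sigma> assms(6) by (simp add: pser_split_least_var const_coeff_def f)
  also have "\<dots> \<in> QM_ser n d"
  proof (rule QM_ser_add)
    show "(\<Sum>k<\<sigma>. pvar k * least_var_quot A k) \<in> QM_ser n d"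
      using assms(5,7) \<sigma> unfolding \<sigma>_def by (intro matrix_vars_part_in_QM_ser) (simp_all add: d_def f)
    have "pcoeff A (mvar k) = 0" if "\<sigma> \<le> k" for k
      using fun_cong[OF assms(7), of "mvar k"] inner_CV_mvar_outside[of d k C] that
      by (simp only: hom_part_1_mvar f \<sigma>_def d_def)
    then show "(\<Sum>k<n - \<sigma>. pvar (k + \<sigma>) * least_var_quot A (k + \<sigma>)) \<in> QM_ser n d"
      using A \<sigma> pos_def_quad_coeffs[OF assms(4) \<sigma>] assms(8)
      by (intro other_vars_part_in_QM_ser) (simp_all add: f \<sigma>_def d_def)
  qed
  finally have "pcoeff A \<in> QM_hat n d"
    using A by (rule pcoeff_in_QM_hat)
  then show ?thesis by (simp add: f d_def)
qed

end
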